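(* Assume the setup of the context with $F$ formally real, and let $V_\lambda$ be a simple $H$-module of type $\lambda\in\Lambda$. Then: (a) there is a symmetric bilinear form $\langle\cdot,\cdot\rangle_\lambda:V_\lambda\times V_\lambda\to K$ which is $H$-invariant, i.e. $\langle h^\ast v,w\rangle_\lambda=\langle v,hw\rangle_\lambda$ for all $h\in H$, $v,w\in V_\lambda$, and positive definite in the sense that $\langle w,w\rangle_\lambda$ is always a sum of squares in $K$ which is $0$ only for $w=0$ (in particular it is nondegenerate); (b) for this form and every $w\in V_\lambda\setminus\{0\}$ one has $\nu(\langle w,w\rangle_\lambda)\in2\Gamma$; (c) $a_\lambda\in\Gamma$, and there exists a balanced matrix representation of type $\lambda$.
   Context: Setup: $\Gamma$ a totally ordered abelian group; $K$ a field with surjective valuation $\nu:K\to\Gamma\cup\{\infty\}$, valuation ring $\mathcal{O}$, maximal ideal $\mathfrak{m}$, residue field $F=\mathcal{O}/\mathfrak{m}$, assumed formally real ($-1$ not a sum of squares); $\nu$ of a matrix is the minimum over entries. $H$ is a finite-dimensional split semisimple $K$-algebra, symmetric with trace form $\tau$; $\Lambda$ indexes simple modules, $\chi_\lambda$ characters, Schur elements $c_\lambda$ defined by $\tau=\sum_\lambda c_\lambda^{-1}\chi_\lambda$. $\ast$ is a $K$-linear involutive antiautomorphism of $H$ and there is a $\ast$-symmetric basis, i.e. a basis $B$ with $B^\ast=B$ and $\tau(bc^\ast)=\delta_{bc}$. $a_\lambda:=-\tfrac12\nu(c_\lambda)$. An irreducible matrix representation $\rho$ of type $\lambda$ is balanced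 if $a_\lambda\in\Gamma$ and $\nu(\rho(b))\ge -a_\lambda$ for all $b$ in every $\ast$-symmetric basis. *)

theory Defs
  imports "Jordan_Normal_Form.Matrix"
begin

text \<open>We represent nu only on nonzero elements; nu 0 = infinity is the
  convention that zero is excluded wherever nu is applied.\<close>

definition is_valuation :: "('k::field \<Rightarrow> 'g::linordered_ab_group_add) \<Rightarrow> bool" where
  "is_valuation \<nu> \<longleftrightarrow>
     (\<forall>x y. x \<noteq> 0 \<longrightarrow> y \<noteq> 0 \<longrightarrow> \<nu> (x * y) = \<nu> x + \<nu> y) \<and>
     (\<forall>x y. x \<noteq> 0 \<longrightarrow> y \<noteq> 0 \<longrightarrow> x + y \<noteq> 0 \<longrightarrow> min (\<nu> x) (\<nu> y) \<le> \<nu> (x + y))"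

definition surjective_valuation :: "('k::field \<Rightarrow> 'g::linordered_ab_group_add) \<Rightarrow> bool" where
  "surjective_valuation \<nu> \<longleftrightarrow> is_valuation \<nu> \<and> (\<forall>g. \<exists>x. x \<noteq> 0 \<and> \<nu> x = g)"

definition val_ring :: "('k::field \<Rightarrow> 'g::linordered_ab_group_add) \<Rightarrow> 'k set" where
  "val_ring \<nu> = {x. x = 0 \<or> 0 \<le> \<nu> x}"

definition val_maxideal :: "('k::field \<Rightarrow> 'g::linordered_ab_group_add) \<Rightarrow> 'k set" where
  "val_maxideal \<nu> = {x. x = 0 \<or> 0 < \<nu> x}"

text \<open>The residue field O/m is formally real: -1 is not a sum of squares in O/m,
  i.e. there are no x_1..x_n in O with -1 - sum x_i^2 in m.\<close>
definition residue_formally_real :: "('k::field \<Rightarrow> 'g::linordered_ab_group_add) \<Rightarrow> bool" where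
  "residue_formally_real \<nu> \<longleftrightarrow>
     \<not> (\<exists>xs. set xs \<subseteq> val_ring \<nu> \<and>
             - 1 - sum_list (map (\<lambda>x. x ^ 2) xs) \<in> val_maxideal \<nu>)"

definition sum_of_squares :: "'k::field \<Rightarrow> bool" where
  "sum_of_squares a \<longleftrightarrow> (\<exists>xs. a = sum_list (map (\<lambda>x. x ^ 2) xs))"

definition in_two_Gamma :: "'g::linordered_ab_group_add \<Rightarrow> bool" where
  "in_two_Gamma g \<longleftrightarrow> (\<exists>h. g = h + h)"

definition fd_algebra :: "('k::field \<Rightarrow> 'h::ring_1 \<Rightarrow> 'h) \<Rightarrow> bool" where
  "fd_algebra sc \<longleftrightarrow> vector_space sc \<and>
     (\<forall>a x y. sc a (x * y) = sc a x * y \<and> sc a (x * y) = x * sc a y) \<and>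
     (\<exists>B. finite_dimensional_vector_space sc B)"

definition left_ideal :: "('k::field \<Rightarrow> 'h::ring_1 \<Rightarrow> 'h) \<Rightarrow> 'h set \<Rightarrow> bool" where
  "left_ideal sc L \<longleftrightarrow> 0 \<in> L \<and> (\<forall>x\<in>L. \<forall>y\<in>L. x + y \<in> L) \<and>
     (\<forall>a. \<forall>x\<in>L. sc a x \<in> L) \<and> (\<forall>h. \<forall>x\<in>L. h * x \<in> L)"

text \<open>Semisimple: the regular left module is semisimple, i.e. every left ideal
  (submodule of H as a left H-module) is a direct summand.\<close>
definition semisimple_alg :: "('k::field \<Rightarrow> 'h::ring_1 \<Rightarrow> 'h) \<Rightarrow> bool" where
  "semisimple_alg sc \<longleftrightarrow> (\<forall>L. left_ideal sc L \<longrightarrow>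
     (\<exists>L'. left_ideal sc L' \<and> L \<inter> L' = {0} \<and> (\<forall>h. \<exists>x\<in>L. \<exists>y\<in>L'. h = x + y)))"

section \<open>Matrix representations (= finite-dimensional modules with a chosen basis)\<close>

definition mat_trace :: "'a::comm_ring_1 mat \<Rightarrow> 'a" where
  "mat_trace A = (\<Sum>i<dim_row A. A $$ (i, i))"

definition matrix_rep :: "('k::field \<Rightarrow> 'h::ring_1 \<Rightarrow> 'h) \<Rightarrow> nat \<Rightarrow> ('h \<Rightarrow> 'k mat) \<Rightarrow> bool" where
  "matrix_rep sc n \<rho> \<longleftrightarrow>
     (\<forall>h. \<rho> h \<in> carrier_mat n n) \<and> \<rho> 1 = 1\<^sub>m n \<and>
     (\<forall>x y. \<rho> (x * y) = \<rho> x * \<rho> y) \<and> (\<forall>x y. \<rho> (x + y) = \<rho> x + \<rho> y) \<and>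
     (\<forall>a x. \<rho> (sc a x) = a \<cdot>\<^sub>m \<rho> x)"

definition subspace_vec :: "nat \<Rightarrow> 'k::field vec set \<Rightarrow> bool" where
  "subspace_vec n U \<longleftrightarrow> U \<subseteq> carrier_vec n \<and> 0\<^sub>v n \<in> U \<and>
     (\<forall>u\<in>U. \<forall>v\<in>U. u + v \<in> U) \<and> (\<forall>a. \<forall>u\<in>U. a \<cdot>\<^sub>v u \<in> U)"

text \<open>Irreducible matrix representation = simple module K^n.\<close>
definition irreducible_rep :: "('k::field \<Rightarrow> 'h::ring_1 \<Rightarrow> 'h) \<Rightarrow> nat \<Rightarrow> ('h \<Rightarrow> 'k mat) \<Rightarrow> bool" where
  "irreducible_rep sc n \<rho> \<longleftrightarrow> matrix_rep sc n \<rho> \<and> 0 < n \<and>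
     (\<forall>U. subspace_vec n U \<longrightarrow> (\<forall>h. \<forall>u\<in>U. \<rho> h *\<^sub>v u \<in> U) \<longrightarrow>
          U = {0\<^sub>v n} \<or> U = carrier_vec n)"

definition iso_rep :: "nat \<Rightarrow> ('h \<Rightarrow> 'k::field mat) \<Rightarrow> nat \<Rightarrow> ('h \<Rightarrow> 'k mat) \<Rightarrow> bool" where
  "iso_rep n \<rho> m \<sigma> \<longleftrightarrow> n = m \<and> (\<exists>P Q. P \<in> carrier_mat n n \<and> Q \<in> carrier_mat n n \<and>
     P * Q = 1\<^sub>m n \<and> Q * P = 1\<^sub>m n \<and> (\<forall>h. \<sigma> h = P * \<rho> h * Q))"

text \<open>Split: every simple module V has End_H(V) = K.\<close>
definition split_alg :: "('k::field \<Rightarrow> 'h::ring_1 \<Rightarrow> 'h) \<Rightarrow> bool" where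
  "split_alg sc \<longleftrightarrow> (\<forall>n \<rho>. irreducible_rep sc n \<rho> \<longrightarrow>
     (\<forall>M \<in> carrier_mat n n. (\<forall>h. M * \<rho> h = \<rho> h * M) \<longrightarrow> (\<exists>a. M = a \<cdot>\<^sub>m 1\<^sub>m n)))"

definition symmetric_trace_form :: "('k::field \<Rightarrow> 'h::ring_1 \<Rightarrow> 'h) \<Rightarrow> ('h \<Rightarrow> 'k) \<Rightarrow> bool" where
  "symmetric_trace_form sc \<tau> \<longleftrightarrow>
     (\<forall>x y. \<tau> (x + y) = \<tau> x + \<tau> y) \<and> (\<forall>a x. \<tau> (sc a x) = a * \<tau> x) \<and>
     (\<forall>x y. \<tau> (x * y) = \<tau> (y * x)) \<and>
     (\<forall>x. (\<forall>y. \<tau> (x * y) = 0) \<longrightarrow> x = 0)"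

definition lin_inv_antiaut :: "('k::field \<Rightarrow> 'h::ring_1 \<Rightarrow> 'h) \<Rightarrow> ('h \<Rightarrow> 'h) \<Rightarrow> bool" where
  "lin_inv_antiaut sc st \<longleftrightarrow>
     (\<forall>x y. st (x + y) = st x + st y) \<and> (\<forall>a x. st (sc a x) = sc a (st x)) \<and>
     (\<forall>x y. st (x * y) = st y * st x) \<and> (\<forall>x. st (st x) = x)"

definition star_sym_basis :: "('k::field \<Rightarrow> 'h::ring_1 \<Rightarrow> 'h) \<Rightarrow> ('h \<Rightarrow> 'k) \<Rightarrow> ('h \<Rightarrow> 'h) \<Rightarrow> 'h set \<Rightarrow> bool" where
  "star_sym_basis sc \<tau> st B \<longleftrightarrow>
     finite_dimensional_vector_space sc B \<and> st ` B = B \<and>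
     (\<forall>b\<in>B. \<forall>c\<in>B. \<tau> (b * st c) = (if b = c then 1 else 0))"

text \<open>Valuation of a matrix (minimum over entries, nu 0 = infinity) is \<ge> g.\<close>
definition mat_val_ge :: "('k::field \<Rightarrow> 'g::linordered_ab_group_add) \<Rightarrow> 'k mat \<Rightarrow> 'g \<Rightarrow> bool" where
  "mat_val_ge \<nu> A g \<longleftrightarrow> (\<forall>i<dim_row A. \<forall>j<dim_col A. A $$ (i, j) \<noteq> 0 \<longrightarrow> g \<le> \<nu> (A $$ (i, j)))"

text \<open>Balanced: a_lambda = -1/2 nu(c_lambda) lies in Gamma, i.e. nu(c_lambda) = 2g
  for some g in Gamma (then a_lambda = -g), and nu(rho(b)) \<ge> -a_lambda = g for all b
  in every *-symmetric basis.\<close>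
definition balanced_rep ::
  "('k::field \<Rightarrow> 'h::ring_1 \<Rightarrow> 'h) \<Rightarrow> ('h \<Rightarrow> 'k) \<Rightarrow> ('h \<Rightarrow> 'h) \<Rightarrow> ('k \<Rightarrow> 'g::linordered_ab_group_add)
     \<Rightarrow> 'k \<Rightarrow> ('h \<Rightarrow> 'k mat) \<Rightarrow> bool" where
  "balanced_rep sc \<tau> st \<nu> c \<rho> \<longleftrightarrow>
     (\<exists>g. \<nu> c = g + g \<and>
        (\<forall>B. star_sym_basis sc \<tau> st B \<longrightarrow> (\<forall>b\<in>B. mat_val_ge \<nu> (\<rho> b) g)))"

end

theory Submission
  imports Defs "Jordan_Normal_Form.Determinant"
begin

text \<open>For a \<open>*\<close>-symmetric basis \<open>B\<close> the form \<open>\<langle>u, v\<rangle> = \<Sum>b\<in>B. (\<rho> b u) \<bullet> (\<rho> b v)\<close> is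
  \<open>H\<close>-invariant, because \<open>\<Sum>b. b \<otimes> b\<^sup>*\<close> commutes with \<open>H\<close>. Each \<open>\<langle>w, w\<rangle>\<close> is a
  sum of squares, so formal reality of the residue field makes the form anisotropic and
  forces \<open>\<nu>\<langle>w, w\<rangle> = 2 min \<nu>(coordinates) \<in> 2\<Gamma>\<close>. Rescaling a \<open>\<langle>,\<rangle>\<close>-orthogonal
  basis therefore gives one whose lengths \<open>\<delta>\<^sub>k\<close> all have valuation \<open>0\<close>. In this basis
  invariance reads \<open>\<rho>(b\<^sup>*)\<^sub>i\<^sub>j \<delta>\<^sub>i = \<delta>\<^sub>j \<rho>(b)\<^sub>j\<^sub>i\<close>, and Schur's orthogonality relation
  \<open>\<Sum>b. \<rho>(b)\<^sub>i\<^sub>j \<rho>(b\<^sup>*)\<^sub>j\<^sub>i = c\<^sub>\<lambda>\<close> becomes \<open>c\<^sub>\<lambda> \<delta>\<^sub>j = \<delta>\<^sub>i \<Sum>b. \<rho>(b)\<^sub>i\<^sub>j\<^sup>2\<close>.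
  Taking valuations, \<open>\<nu>(c\<^sub>\<lambda>)\<close> is the valuation of a sum of squares, hence lies in \<open>2\<Gamma>\<close>
  and is at most \<open>2 \<nu>(\<rho>(b)\<^sub>i\<^sub>j)\<close>: the representation is balanced.\<close>

section \<open>Valuations and sums of squares\<close>

lemma double_le_double_imp_le: "(a::'g::linordered_ab_group_add) + a \<le> b + b \<Longrightarrow> a \<le> b"
  by (metis add_strict_mono linorder_not_le)

abbreviation sum_squares :: "'a::semiring_1 list \<Rightarrow> 'a" where
  "sum_squares xs \<equiv> sum_list (map (\<lambda>x. x ^ 2) xs)"

lemma sum_squares_of_set:
  "finite A \<Longrightarrow> \<exists>xs. (\<Sum>a\<in>A. (g a)^2) = sum_squares xs \<and> set xs = g ` A"
proof (induction A rule: finite_induct)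
  case empty then show ?case by (intro exI[of _ "[]"]) simp
next
  case (insert a A)
  then obtain xs where "(\<Sum>a\<in>A. (g a)^2) = sum_squares xs \<and> set xs = g ` A" by blast
  then show ?case using insert by (intro exI[of _ "g a # xs"]) simp
qed

context
  fixes \<nu> :: "'k::field \<Rightarrow> 'g::linordered_ab_group_add"
  assumes valuation: "is_valuation \<nu>"
begin

lemma val_mult: "x \<noteq> 0 \<Longrightarrow> y \<noteq> 0 \<Longrightarrow> \<nu> (x * y) = \<nu> x + \<nu> y"
  using valuation unfolding is_valuation_def by blast

lemma val_add_ge_min: "x \<noteq> 0 \<Longrightarrow> y \<noteq> 0 \<Longrightarrow> x + y \<noteq> 0 \<Longrightarrow> min (\<nu> x) (\<nu> y) \<le> \<nu> (x + y)"
  using valuation unfolding is_valuation_def by blast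

lemma val_one: "\<nu> 1 = 0"
  using val_mult[of 1 1] by simp

lemma val_minus: "x \<noteq> 0 \<Longrightarrow> \<nu> (- x) = \<nu> x"
  using val_mult[of "-1" x] val_mult[of "-1" "-1"] val_one by simp

lemma val_power2: "x \<noteq> 0 \<Longrightarrow> \<nu> (x^2) = \<nu> x + \<nu> x"
  by (simp add: power2_eq_square val_mult)

lemma val_divide: "x \<noteq> 0 \<Longrightarrow> y \<noteq> 0 \<Longrightarrow> \<nu> (x / y) = \<nu> x - \<nu> y"
  using val_mult[of "x / y" y] by (simp add: algebra_simps)

lemma val_ring_add: "x \<in> val_ring \<nu> \<Longrightarrow> y \<in> val_ring \<nu> \<Longrightarrow> x + y \<in> val_ring \<nu>"
  using val_add_ge_min[of x y] unfolding val_ring_def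
  by (cases "x = 0 \<or> y = 0 \<or> x + y = 0") (auto simp: min_def split: if_splits)

lemma val_ring_mult: "x \<in> val_ring \<nu> \<Longrightarrow> y \<in> val_ring \<nu> \<Longrightarrow> x * y \<in> val_ring \<nu>"
  using val_mult[of x y] unfolding val_ring_def by (cases "x = 0 \<or> y = 0") auto

lemma sum_squares_in_val_ring: "set (xs::'k list) \<subseteq> val_ring \<nu> \<Longrightarrow> sum_squares xs \<in> val_ring \<nu>"
proof (induction xs)
  case (Cons x xs)
  then show ?case by (auto intro!: val_ring_add val_ring_mult simp: power2_eq_square)
qed (simp add: val_ring_def)

context
  assumes formally_real: "residue_formally_real \<nu>"
begin

lemma val_one_plus_sum_squares:
  assumes "set (xs::'k list) \<subseteq> val_ring \<nu>"
  shows "1 + sum_squares xs \<noteq> 0 \<and> \<nu> (1 + sum_squares xs) = 0"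
proof -
  define u where "u = 1 + sum_squares xs"
  have "u \<in> val_ring \<nu>"
    unfolding u_def using val_ring_add[OF _ sum_squares_in_val_ring[OF assms]]
    by (simp add: val_ring_def val_one)
  moreover have "u \<notin> val_maxideal \<nu>"
  proof
    assume "u \<in> val_maxideal \<nu>"
    then have "- u \<in> val_maxideal \<nu>"
      using val_minus[of u] unfolding val_maxideal_def by (cases "u = 0") auto
    with formally_real assms show False
      unfolding residue_formally_real_def u_def by (auto simp: algebra_simps)
  qed
  ultimately show ?thesis unfolding u_def val_ring_def val_maxideal_def by auto
qed

text \<open>Dividing by an entry of minimal valuation leaves \<open>1 +\<close> a sum of squares in the
  valuation ring, which is a unit because the residue field is formally real.\<close>
lemma val_sum_squares:
  assumes "\<exists>x\<in>set (xs::'k list). x \<noteq> 0"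
  obtains x0 where "x0 \<in> set xs" "x0 \<noteq> 0" "\<And>x. x \<in> set xs \<Longrightarrow> x \<noteq> 0 \<Longrightarrow> \<nu> x0 \<le> \<nu> x"
    and "sum_squares xs \<noteq> 0" "\<nu> (sum_squares xs) = \<nu> x0 + \<nu> x0"
proof -
  define A where "A = {x\<in>set xs. x \<noteq> 0}"
  have A: "finite (\<nu> ` A)" "\<nu> ` A \<noteq> {}" using assms unfolding A_def by auto
  obtain x0 where x0: "x0 \<in> A" "\<nu> x0 = Min (\<nu> ` A)" using Min_in[OF A] by auto
  have x0_min: "\<nu> x0 \<le> \<nu> x" if "x \<in> set xs" "x \<noteq> 0" for x
    using x0 A that unfolding A_def by auto
  have x0_nz: "x0 \<noteq> 0" "x0 \<in> set xs" using x0 unfolding A_def by auto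
  define ys where "ys = map (\<lambda>x. x / x0) xs"
  have "1 \<in> set ys" unfolding ys_def using x0_nz by force
  then have split: "sum_squares ys = 1 + sum_squares (remove1 1 ys)"
    using sum_list_map_remove1[of 1 ys "\<lambda>x. x^2"] by simp
  have "x / x0 \<in> val_ring \<nu>" if "x \<in> set xs" for x
    using that x0_min[of x] x0_nz val_divide[of x x0] unfolding val_ring_def by (cases "x = 0") auto
  then have "set ys \<subseteq> val_ring \<nu>" unfolding ys_def by auto
  then have "set (remove1 1 ys) \<subseteq> val_ring \<nu>" by (meson notin_set_remove1 subset_iff)
  from val_one_plus_sum_squares[OF this] split
  have ys: "sum_squares ys \<noteq> 0" "\<nu> (sum_squares ys) = 0" by auto
  have eq: "sum_squares xs = x0^2 * sum_squares ys"
    unfolding ys_def by (simp add: sum_list_const_mult[symmetric] o_def power_divide x0_nz)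
  have "sum_squares xs \<noteq> 0" using ys x0_nz eq by simp
  moreover have "\<nu> (sum_squares xs) = \<nu> x0 + \<nu> x0"
    using ys x0_nz eq val_mult[of "x0^2"] val_power2 by simp
  ultimately show ?thesis using that x0_nz x0_min by blast
qed

lemma sum_squares_eq_0_iff: "sum_squares (xs::'k list) = 0 \<longleftrightarrow> (\<forall>x\<in>set xs. x = 0)"
proof
  show "sum_squares xs = 0 \<Longrightarrow> \<forall>x\<in>set xs. x = 0"
    using val_sum_squares[of xs] by blast
qed (induction xs; simp)

lemma val_sum_squares_le: "x \<in> set (xs::'k list) \<Longrightarrow> x \<noteq> 0 \<Longrightarrow> \<nu> (sum_squares xs) \<le> \<nu> x + \<nu> x"
  using val_sum_squares[of xs] by (metis add_mono)

lemma val_sum_squares_in_two_Gamma: "sum_squares (xs::'k list) \<noteq> 0 \<Longrightarrow> in_two_Gamma (\<nu> (sum_squares xs))"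
  using val_sum_squares[of xs] sum_squares_eq_0_iff unfolding in_two_Gamma_def by metis

lemma of_nat_neq_0: "0 < m \<Longrightarrow> (of_nat m :: 'k) \<noteq> 0"
  using sum_squares_eq_0_iff[of "replicate m (1::'k)"]
  by (simp add: map_replicate sum_list_replicate)

end
end

lemma exists_scaling_to_val_0:
  fixes \<nu> :: "'k::field \<Rightarrow> 'g::linordered_ab_group_add"
  assumes val: "surjective_valuation \<nu>" and a: "a \<noteq> 0" "in_two_Gamma (\<nu> a)"
  obtains t where "t \<noteq> 0" "\<nu> (t^2 * a) = 0"
proof -
  have valuation: "is_valuation \<nu>" using val unfolding surjective_valuation_def by blast
  obtain g where g: "\<nu> a = g + g" using a(2) unfolding in_two_Gamma_def by blast
  obtain t where t: "t \<noteq> 0" "\<nu> t = - g" using val unfolding surjective_valuation_def by blast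
  have "\<nu> (t^2 * a) = \<nu> t + \<nu> t + \<nu> a"
    using val_mult[OF valuation, of "t^2" a] val_power2[OF valuation t(1)] t a by simp
  then show ?thesis using that t g by simp
qed

section \<open>Symmetric algebras with an involution\<close>

definition linear_form :: "('k::field \<Rightarrow> 'h::ring_1 \<Rightarrow> 'h) \<Rightarrow> ('h \<Rightarrow> 'k) \<Rightarrow> bool" where
  "linear_form sc \<phi> \<longleftrightarrow> (\<forall>x y. \<phi> (x + y) = \<phi> x + \<phi> y) \<and> (\<forall>a x. \<phi> (sc a x) = a * \<phi> x)"

locale star_algebra =
  fixes sc :: "'k::field \<Rightarrow> 'h::ring_1 \<Rightarrow> 'h" and \<tau> :: "'h \<Rightarrow> 'k" and st :: "'h \<Rightarrow> 'h"
  assumes algebra: "fd_algebra sc"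
    and trace_form: "symmetric_trace_form sc \<tau>"
    and star: "lin_inv_antiaut sc st"
begin

lemma scale_mult_left: "sc a (x * y) = sc a x * y"
  and scale_mult_right: "sc a (x * y) = x * sc a y"
  using algebra unfolding fd_algebra_def by blast+

lemma trace_add: "\<tau> (x + y) = \<tau> x + \<tau> y"
  and trace_scale: "\<tau> (sc a x) = a * \<tau> x"
  and trace_mult_commute: "\<tau> (x * y) = \<tau> (y * x)"
  using trace_form unfolding symmetric_trace_form_def by blast+

lemma star_add: "st (x + y) = st x + st y"
  and star_scale: "st (sc a x) = sc a (st x)"
  and star_mult: "st (x * y) = st y * st x"
  and star_star [simp]: "st (st x) = x"
  using star unfolding lin_inv_antiaut_def by blast+

lemma linear_form_0: "linear_form sc \<phi> \<Longrightarrow> \<phi> 0 = 0"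
  unfolding linear_form_def by (metis add_cancel_right_right add_0)

lemma linear_form_sum:
  assumes "linear_form sc \<phi>" and "finite A"
  shows "\<phi> (\<Sum>v\<in>A. sc (u v) v) = (\<Sum>v\<in>A. u v * \<phi> v)"
  using assms(2)
proof induction
  case empty
  then show ?case using linear_form_0[OF assms(1)] by simp
next
  case (insert a A)
  then show ?case using assms(1) unfolding linear_form_def by simp
qed

lemma linear_form_trace: "linear_form sc \<tau>"
  unfolding linear_form_def by (simp add: trace_add trace_scale)

lemma linear_form_star: "linear_form sc \<phi> \<Longrightarrow> linear_form sc (\<lambda>x. \<phi> (st x))"
  unfolding linear_form_def by (simp add: star_add star_scale)

lemma linear_form_mult_right: "linear_form sc \<phi> \<Longrightarrow> linear_form sc (\<lambda>x. \<phi> (x * z))"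
  unfolding linear_form_def by (simp add: distrib_right scale_mult_left[symmetric])

lemma linear_form_mult_left: "linear_form sc \<phi> \<Longrightarrow> linear_form sc (\<lambda>x. \<phi> (z * x))"
  unfolding linear_form_def by (simp add: distrib_left scale_mult_right[symmetric])

context
  fixes B assumes basis: "star_sym_basis sc \<tau> st B"
begin

lemma finite_basis: "finite B"
  using basis unfolding star_sym_basis_def finite_dimensional_vector_space_def
    finite_dimensional_vector_space_axioms_def by blast

lemma star_in_basis: "b \<in> B \<Longrightarrow> st b \<in> B"
  using basis unfolding star_sym_basis_def by blast

lemma trace_basis_dual: "b \<in> B \<Longrightarrow> c \<in> B \<Longrightarrow> \<tau> (b * st c) = (if b = c then 1 else 0)"
  using basis unfolding star_sym_basis_def by blast

lemma sum_basis_star: "(\<Sum>b\<in>B. g (st b)) = (\<Sum>b\<in>B. g b)"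
proof -
  have "inj_on st B" by (metis inj_onI star_star)
  with basis show ?thesis unfolding star_sym_basis_def using sum.reindex[of st B g] by simp
qed

lemma basis_expansion: "\<exists>u. x = (\<Sum>v\<in>B. sc (u v) v)"
proof -
  interpret finite_dimensional_vector_space sc B
    using basis unfolding star_sym_basis_def by blast
  show ?thesis using span_Basis span_finite[OF finite_Basis] by auto
qed

lemma dual_basis_expansion:
  assumes "linear_form sc \<phi>"
  shows "\<phi> x = (\<Sum>b\<in>B. \<tau> (x * st b) * \<phi> b)"
proof -
  obtain u where u: "x = (\<Sum>v\<in>B. sc (u v) v)" using basis_expansion by blast
  have coeff: "\<tau> (x * st c) = u c" if "c \<in> B" for c
  proof -
    have "\<tau> (x * st c) = (\<Sum>v\<in>B. u v * \<tau> (v * st c))"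
      unfolding u by (rule linear_form_sum[OF linear_form_mult_right[OF linear_form_trace] finite_basis])
    also have "\<dots> = (\<Sum>v\<in>B. if v = c then u v else 0)"
      by (rule sum.cong) (auto simp: trace_basis_dual that)
    finally show ?thesis using that finite_basis by simp
  qed
  have "\<phi> x = (\<Sum>v\<in>B. u v * \<phi> v)" unfolding u by (rule linear_form_sum[OF assms finite_basis])
  also have "\<dots> = (\<Sum>b\<in>B. \<tau> (x * st b) * \<phi> b)" by (rule sum.cong) (auto simp: coeff)
  finally show ?thesis .
qed

lemma trace_star: "\<tau> (st x) = \<tau> x"
proof -
  have on_basis: "\<tau> (st (b * c)) = \<tau> (b * c)" if "b \<in> B" "c \<in> B" for b c
    using trace_basis_dual[of "st c" b] trace_basis_dual[of b "st c"] that star_in_basis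
    by (auto simp: star_mult)
  have on_basis_right: "\<tau> (st (y * c)) = \<tau> (y * c)" if "c \<in> B" for y c
  proof -
    have "linear_form sc (\<lambda>x. \<tau> (st (x * c)))"
      using linear_form_mult_right[OF linear_form_star[OF linear_form_trace]] by simp
    then have "\<tau> (st (y * c)) = (\<Sum>b\<in>B. \<tau> (y * st b) * \<tau> (st (b * c)))"
      by (rule dual_basis_expansion)
    also have "\<dots> = (\<Sum>b\<in>B. \<tau> (y * st b) * \<tau> (b * c))" by (rule sum.cong) (auto simp: on_basis that)
    also have "\<dots> = \<tau> (y * c)"
      by (rule dual_basis_expansion[OF linear_form_mult_right[OF linear_form_trace], symmetric])
    finally show ?thesis .
  qed
  have "linear_form sc (\<lambda>y. \<tau> (st (x * y)))"
    using linear_form_mult_left[OF linear_form_star[OF linear_form_trace]] by simp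
  then have "\<tau> (st (x * 1)) = (\<Sum>b\<in>B. \<tau> (1 * st b) * \<tau> (st (x * b)))"
    by (rule dual_basis_expansion)
  also have "\<dots> = (\<Sum>b\<in>B. \<tau> (1 * st b) * \<tau> (x * b))" by (rule sum.cong) (auto simp: on_basis_right)
  also have "\<dots> = \<tau> (x * 1)"
    by (rule dual_basis_expansion[OF linear_form_mult_left[OF linear_form_trace], symmetric])
  finally show ?thesis by simp
qed

text \<open>Both identities express that \<open>\<Sum>b. b \<otimes> b\<^sup>*\<close> commutes with the action of \<open>H\<close>.\<close>
lemma basis_pairing_mult_left:
  assumes "linear_form sc \<phi>" "linear_form sc \<psi>"
  shows "(\<Sum>b\<in>B. \<phi> (h * b) * \<psi> (st b)) = (\<Sum>b\<in>B. \<phi> b * \<psi> (st b * h))"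
proof -
  have "(\<Sum>b\<in>B. \<phi> (h * b) * \<psi> (st b)) = (\<Sum>b\<in>B. (\<Sum>c\<in>B. \<tau> (h * b * st c) * \<phi> c) * \<psi> (st b))"
    by (simp only: dual_basis_expansion[OF assms(1), of "h * _"])
  also have "\<dots> = (\<Sum>b\<in>B. (\<Sum>c\<in>B. \<tau> (h * st b * st c) * \<phi> c) * \<psi> b)"
    using sum_basis_star[of "\<lambda>b. (\<Sum>c\<in>B. \<tau> (h * b * st c) * \<phi> c) * \<psi> (st b)"] by simp
  also have "\<dots> = (\<Sum>c\<in>B. \<Sum>b\<in>B. \<tau> (h * st b * st c) * \<phi> c * \<psi> b)"
    unfolding sum_distrib_right by (rule sum.swap)
  also have "\<dots> = (\<Sum>c\<in>B. \<Sum>b\<in>B. \<phi> c * (\<tau> (st c * h * st b) * \<psi> b))"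
  proof (intro sum.cong refl)
    fix b c
    have "\<tau> (h * st b * st c) = \<tau> (st c * h * st b)"
      using trace_mult_commute[of "h * st b" "st c"] by (simp add: mult.assoc)
    then show "\<tau> (h * st b * st c) * \<phi> c * \<psi> b = \<phi> c * (\<tau> (st c * h * st b) * \<psi> b)"
      by (simp only: ac_simps)
  qed
  also have "\<dots> = (\<Sum>b\<in>B. \<phi> b * \<psi> (st b * h))"
    by (simp only: dual_basis_expansion[OF assms(2), of "st _ * h"] sum_distrib_left)
  finally show ?thesis .
qed

lemma basis_pairing_mult_right:
  assumes "linear_form sc \<phi>" "linear_form sc \<psi>"
  shows "(\<Sum>b\<in>B. \<phi> (b * st h) * \<psi> b) = (\<Sum>b\<in>B. \<phi> b * \<psi> (b * h))"
proof -
  have "(\<Sum>b\<in>B. \<phi> (b * st h) * \<psi> b) = (\<Sum>b\<in>B. (\<Sum>c\<in>B. \<tau> (b * st h * st c) * \<phi> c) * \<psi> b)"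
    by (simp only: dual_basis_expansion[OF assms(1), of "_ * st h"])
  also have "\<dots> = (\<Sum>c\<in>B. \<Sum>b\<in>B. \<tau> (b * st h * st c) * \<phi> c * \<psi> b)"
    unfolding sum_distrib_right by (rule sum.swap)
  also have "\<dots> = (\<Sum>c\<in>B. \<Sum>b\<in>B. \<phi> c * (\<tau> (c * h * st b) * \<psi> b))"
  proof (intro sum.cong refl)
    fix b c
    have "\<tau> (b * st h * st c) = \<tau> (c * h * st b)"
      using trace_star[of "c * h * st b"] by (simp add: star_mult mult.assoc)
    then show "\<tau> (b * st h * st c) * \<phi> c * \<psi> b = \<phi> c * (\<tau> (c * h * st b) * \<psi> b)"
      by (simp only: ac_simps)
  qed
  also have "\<dots> = (\<Sum>b\<in>B. \<phi> b * \<psi> (b * h))"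
    by (simp only: dual_basis_expansion[OF assms(2), of "_ * h"] sum_distrib_left)
  finally show ?thesis .
qed

end
end

section \<open>Matrix representations\<close>

context
  fixes sc :: "'k::field \<Rightarrow> 'h::ring_1 \<Rightarrow> 'h" and n :: nat and \<rho> :: "'h \<Rightarrow> 'k mat"
  assumes rep: "matrix_rep sc n \<rho>"
begin

lemma rep_carrier [simp]: "\<rho> h \<in> carrier_mat n n"
  using rep unfolding matrix_rep_def by blast

lemma rep_dims [simp]: "dim_row (\<rho> h) = n" "dim_col (\<rho> h) = n"
  using carrier_matD[OF rep_carrier[of h]] by auto

lemma rep_mult: "\<rho> (x * y) = \<rho> x * \<rho> y"
  and rep_add: "\<rho> (x + y) = \<rho> x + \<rho> y"
  and rep_scale: "\<rho> (sc a x) = a \<cdot>\<^sub>m \<rho> x"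
  and rep_one: "\<rho> 1 = 1\<^sub>m n"
  using rep unfolding matrix_rep_def by blast+

lemma rep_mult_entry:
  "i < n \<Longrightarrow> j < n \<Longrightarrow> \<rho> (x * y) $$ (i, j) = (\<Sum>k<n. \<rho> x $$ (i, k) * \<rho> y $$ (k, j))"
  unfolding rep_mult by (simp add: scalar_prod_def atLeast0LessThan)

lemma rep_mult_vec_index:
  "u \<in> carrier_vec n \<Longrightarrow> i < n \<Longrightarrow> (\<rho> x *\<^sub>v u) $ i = (\<Sum>k<n. \<rho> x $$ (i, k) * u $ k)"
  by (simp add: scalar_prod_def atLeast0LessThan)

lemma rep_mult_vec: "u \<in> carrier_vec n \<Longrightarrow> \<rho> x *\<^sub>v (\<rho> y *\<^sub>v u) = \<rho> (x * y) *\<^sub>v u"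
  unfolding rep_mult by (simp add: assoc_mult_mat_vec[of _ n n _ n])

lemma linear_form_rep_entry: "i < n \<Longrightarrow> j < n \<Longrightarrow> linear_form sc (\<lambda>x. \<rho> x $$ (i, j))"
  unfolding linear_form_def rep_add rep_scale by simp

lemma linear_form_rep_vec:
  assumes "u \<in> carrier_vec n" and "i < n"
  shows "linear_form sc (\<lambda>x. (\<rho> x *\<^sub>v u) $ i)"
proof -
  note rep_mult_vec_index[OF assms]
  moreover have "linear_form sc (\<lambda>x. \<Sum>k<n. \<rho> x $$ (i, k) * u $ k)"
    unfolding linear_form_def rep_add rep_scale
    using assms by (simp add: sum.distrib distrib_right sum_distrib_left mult.assoc)
  ultimately show ?thesis by (simp only:)
qed

end

lemma mult_mat_vec_zero [simp]: "A \<in> carrier_mat m n \<Longrightarrow> A *\<^sub>v 0\<^sub>v n = (0\<^sub>v m :: 'a::semiring_0 vec)"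
  by (auto intro!: eq_vecI)

lemma mat_eq_0_if_mult_vec_eq_0:
  assumes "M \<in> carrier_mat m n" and "\<And>v. v \<in> carrier_vec n \<Longrightarrow> M *\<^sub>v v = 0\<^sub>v m"
  shows "M = (0\<^sub>m m n :: 'a::semiring_1 mat)"
proof (rule eq_matI)
  fix i j assume that: "i < dim_row (0\<^sub>m m n :: 'a mat)" "j < dim_col (0\<^sub>m m n :: 'a mat)"
  then have "M $$ (i, j) = (M *\<^sub>v unit_vec n j) $ i" using assms(1) by simp
  then show "M $$ (i, j) = 0\<^sub>m m n $$ (i, j)" using that assms(2)[of "unit_vec n j"] by simp
qed (use assms(1) in auto)

lemma subspace_vec_carrier: "subspace_vec n (carrier_vec n)"
  unfolding subspace_vec_def by auto

lemma subspace_vec_image: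
  assumes A: "A \<in> carrier_mat m n" and U: "subspace_vec n U"
  shows "subspace_vec m ((*\<^sub>v) A ` U)"
  unfolding subspace_vec_def
proof (intro conjI ballI allI)
  have Uc: "U \<subseteq> carrier_vec n" and "0\<^sub>v n \<in> U" using U unfolding subspace_vec_def by auto
  then show "(*\<^sub>v) A ` U \<subseteq> carrier_vec m" and "0\<^sub>v m \<in> (*\<^sub>v) A ` U"
    using A by (auto intro!: image_eqI[of _ _ "0\<^sub>v n"])
  fix u v assume "u \<in> (*\<^sub>v) A ` U" "v \<in> (*\<^sub>v) A ` U"
  then obtain x y where "x \<in> U" "y \<in> U" "u = A *\<^sub>v x" "v = A *\<^sub>v y" by auto
  moreover from this have "x \<in> carrier_vec n" "y \<in> carrier_vec n" using Uc by auto
  ultimately show "u + v \<in> (*\<^sub>v) A ` U"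
    using U mult_add_distrib_mat_vec[OF A, of x y] unfolding subspace_vec_def
    by (intro image_eqI[of _ _ "x + y"]) auto
next
  fix a u assume "u \<in> (*\<^sub>v) A ` U"
  then obtain x where "x \<in> U" "u = A *\<^sub>v x" by auto
  then show "a \<cdot>\<^sub>v u \<in> (*\<^sub>v) A ` U"
    using U mult_mat_vec[OF A] unfolding subspace_vec_def
    by (intro image_eqI[of _ _ "a \<cdot>\<^sub>v x"]) auto
qed

lemma subspace_vec_kernel:
  assumes A: "A \<in> carrier_mat m n"
  shows "subspace_vec n {v \<in> carrier_vec n. A *\<^sub>v v = 0\<^sub>v m}"
  unfolding subspace_vec_def
  using A by (auto simp: mult_add_distrib_mat_vec[OF A] mult_mat_vec[OF A])

lemma irreducible_repD:
  assumes "irreducible_rep sc n \<rho>" and "subspace_vec n U" and "\<And>h u. u \<in> U \<Longrightarrow> \<rho> h *\<^sub>v u \<in> U"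
  shows "U = {0\<^sub>v n} \<or> U = carrier_vec n"
  using assms unfolding irreducible_rep_def by blast

lemma irreducible_rep_matrix_rep: "irreducible_rep sc n \<rho> \<Longrightarrow> matrix_rep sc n \<rho>"
  and irreducible_rep_dim_pos: "irreducible_rep sc n \<rho> \<Longrightarrow> 0 < n"
  unfolding irreducible_rep_def by blast+

lemma exists_kernel_vec_of_wide_mat:
  fixes A :: "'a::field mat"
  assumes A: "A \<in> carrier_mat n m" and nm: "n < m"
  obtains v where "v \<in> carrier_vec m" "v \<noteq> 0\<^sub>v m" "A *\<^sub>v v = 0\<^sub>v n"
proof -
  define A' where "A' = mat m m (\<lambda>(i,j). if i < n then A $$ (i,j) else 0)"
  have A'c: "A' \<in> carrier_mat m m" unfolding A'_def by simp
  have "det A' = 0"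
  proof (rule ccontr)
    assume "det A' \<noteq> 0"
    from det_non_zero_imp_unit[OF A'c this, of "()"]
    obtain B where B: "B \<in> carrier_mat m m" "A' * B = 1\<^sub>m m"
      unfolding Units_def ring_mat_def by auto
    have "row A' (m-1) = 0\<^sub>v m" by (rule eq_vecI) (use nm in \<open>auto simp: A'_def\<close>)
    then have "(A' * B) $$ (m-1, m-1) = 0"
      using B(1) A'c nm by (simp, intro scalar_prod_left_zero) auto
    then show False unfolding B(2) using nm by simp
  qed
  then obtain v where v: "v \<in> carrier_vec m" "v \<noteq> 0\<^sub>v m" "A' *\<^sub>v v = 0\<^sub>v m"
    using det_0_iff_vec_prod_zero_field[OF A'c] by blast
  have "A *\<^sub>v v = 0\<^sub>v n"
  proof (rule eq_vecI)
    fix i assume i: "i < dim_vec (0\<^sub>v n :: 'a vec)"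
    have "(A' *\<^sub>v v) $ i = (A *\<^sub>v v) $ i"
      using i A nm v(1) unfolding A'_def by (simp add: scalar_prod_def row_def)
    then show "(A *\<^sub>v v) $ i = 0\<^sub>v n $ i" using i v nm by simp
  qed (use A in simp)
  then show ?thesis using v that by blast
qed

context
  fixes sc :: "'k::field \<Rightarrow> 'h::ring_1 \<Rightarrow> 'h" and \<rho>1 \<rho>2 :: "'h \<Rightarrow> 'k mat" and n1 n2 M
  assumes irr1: "irreducible_rep sc n1 \<rho>1" and irr2: "irreducible_rep sc n2 \<rho>2"
    and M: "M \<in> carrier_mat n1 n2" and intertwines: "\<And>h. \<rho>1 h * M = M * \<rho>2 h"
    and M_nz: "M \<noteq> 0\<^sub>m n1 n2"
begin

private lemma reps: "matrix_rep sc n1 \<rho>1" "matrix_rep sc n2 \<rho>2"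
  using irr1 irr2 by (simp_all add: irreducible_rep_matrix_rep)

private lemma intertwines_vec: "v \<in> carrier_vec n2 \<Longrightarrow> \<rho>1 h *\<^sub>v (M *\<^sub>v v) = M *\<^sub>v (\<rho>2 h *\<^sub>v v)"
  using intertwines[of h] M rep_carrier[OF reps(1)] rep_carrier[OF reps(2)]
  by (metis assoc_mult_mat_vec)

lemma intertwiner_kernel_trivial:
  assumes "v \<in> carrier_vec n2" and "M *\<^sub>v v = 0\<^sub>v n1"
  shows "v = 0\<^sub>v n2"
proof -
  let ?K = "{v \<in> carrier_vec n2. M *\<^sub>v v = 0\<^sub>v n1}"
  have "\<rho>2 h *\<^sub>v u \<in> ?K" if u: "u \<in> ?K" for h u
  proof -
    have "0\<^sub>v n1 = \<rho>1 h *\<^sub>v (M *\<^sub>v u)" using u mult_mat_vec_zero[OF rep_carrier[OF reps(1)]] by simp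
    also have "\<dots> = M *\<^sub>v (\<rho>2 h *\<^sub>v u)" using u intertwines_vec by blast
    finally show ?thesis using u mult_mat_vec_carrier[OF rep_carrier[OF reps(2)]] by simp
  qed
  with irr2 subspace_vec_kernel[OF M] have "?K = {0\<^sub>v n2} \<or> ?K = carrier_vec n2"
    by (rule irreducible_repD)
  moreover have "?K \<noteq> carrier_vec n2"
    using mat_eq_0_if_mult_vec_eq_0[OF M] M_nz by blast
  ultimately show ?thesis using assms by blast
qed

lemma intertwiner_image_full:
  assumes "y \<in> carrier_vec n1"
  shows "\<exists>x\<in>carrier_vec n2. y = M *\<^sub>v x"
proof -
  let ?I = "(*\<^sub>v) M ` carrier_vec n2"
  have "\<rho>1 h *\<^sub>v u \<in> ?I" if u: "u \<in> ?I" for h u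
  proof -
    obtain x where "x \<in> carrier_vec n2" "u = M *\<^sub>v x" using u by auto
    then show ?thesis
      using intertwines_vec mult_mat_vec_carrier[OF rep_carrier[OF reps(2)]] by (auto intro!: image_eqI[of _ _ "\<rho>2 h *\<^sub>v x"])
  qed
  with irr1 subspace_vec_image[OF M subspace_vec_carrier] have "?I = {0\<^sub>v n1} \<or> ?I = carrier_vec n1"
    by (rule irreducible_repD)
  moreover have "?I \<noteq> {0\<^sub>v n1}"
    using mat_eq_0_if_mult_vec_eq_0[OF M] M_nz by blast
  ultimately show ?thesis using assms by blast
qed

lemma intertwiner_square: "n1 = n2"
proof (rule ccontr)
  assume "n1 \<noteq> n2"
  then consider "n1 < n2" | "n2 < n1" by linarith
  then show False
  proof cases
    case 1
    with M obtain v where "v \<in> carrier_vec n2" "v \<noteq> 0\<^sub>v n2" "M *\<^sub>v v = 0\<^sub>v n1"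
      by (rule exists_kernel_vec_of_wide_mat)
    then show False using intertwiner_kernel_trivial by blast
  next
    case 2
    have Mt: "transpose_mat M \<in> carrier_mat n2 n1" using M by simp
    from Mt 2 obtain y where y: "y \<in> carrier_vec n1" "y \<noteq> 0\<^sub>v n1" "transpose_mat M *\<^sub>v y = 0\<^sub>v n2"
      by (rule exists_kernel_vec_of_wide_mat)
    txt \<open>\<open>y\<close> is orthogonal to the image of \<open>M\<close>, which is everything.\<close>
    have "y = 0\<^sub>v n1"
    proof (rule eq_vecI)
      fix i assume i: "i < dim_vec (0\<^sub>v n1 :: 'k vec)"
      then obtain x where x: "x \<in> carrier_vec n2" "unit_vec n1 i = M *\<^sub>v x"
        using intertwiner_image_full[of "unit_vec n1 i"] by auto
      have "y $ i = y \<bullet> (M *\<^sub>v x)" using i y(1) x(2)[symmetric] by simp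
      also have "\<dots> = 0" using transpose_vec_mult_scalar[OF M x(1) y(1)] y(3) x(1) by simp
      finally show "y $ i = 0\<^sub>v n1 $ i" using i by simp
    qed (use y in simp)
    with y show False by simp
  qed
qed

lemma schur_iso: "iso_rep n1 \<rho>1 n2 \<rho>2"
proof -
  have Mc: "M \<in> carrier_mat n1 n1" using M intertwiner_square by simp
  have "det M \<noteq> 0"
    using det_0_iff_vec_prod_zero_field[OF Mc] intertwiner_kernel_trivial intertwiner_square by auto
  from det_non_zero_imp_unit[OF Mc this, of "()"]
  obtain N where N: "N \<in> carrier_mat n1 n1" "M * N = 1\<^sub>m n1" "N * M = 1\<^sub>m n1"
    unfolding Units_def ring_mat_def by auto
  have "\<rho>2 h = N * \<rho>1 h * M" for h
  proof -
    have c2: "\<rho>2 h \<in> carrier_mat n1 n1" using rep_carrier[OF reps(2)] intertwiner_square by simp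
    have "N * \<rho>1 h * M = N * (M * \<rho>2 h)"
      using assoc_mult_mat[OF N(1) rep_carrier[OF reps(1)] Mc] intertwines by simp
    also have "\<dots> = \<rho>2 h" using assoc_mult_mat[OF N(1) Mc c2] N c2 by simp
    finally show ?thesis by simp
  qed
  then show ?thesis unfolding iso_rep_def using intertwiner_square N Mc by blast
qed

end

lemma mat_trace_mult_commute:
  fixes A B :: "'a::comm_ring_1 mat"
  assumes "A \<in> carrier_mat n m" "B \<in> carrier_mat m n"
  shows "mat_trace (A * B) = mat_trace (B * A)"
proof -
  have "mat_trace (A * B) = (\<Sum>i<n. \<Sum>k<m. A $$ (i, k) * B $$ (k, i))"
    using assms by (simp add: mat_trace_def scalar_prod_def atLeast0LessThan)
  also have "\<dots> = (\<Sum>k<m. \<Sum>i<n. B $$ (k, i) * A $$ (i, k))"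
    by (subst sum.swap) (simp add: mult.commute)
  also have "\<dots> = mat_trace (B * A)"
    using assms by (simp add: mat_trace_def scalar_prod_def atLeast0LessThan)
  finally show ?thesis .
qed

lemma mat_trace_conj:
  fixes A P Q :: "'a::comm_ring_1 mat"
  assumes A: "A \<in> carrier_mat n n" and P: "P \<in> carrier_mat n n" and Q: "Q \<in> carrier_mat n n"
    and PQ: "P * Q = 1\<^sub>m n"
  shows "mat_trace (Q * A * P) = mat_trace A"
proof -
  have "mat_trace (Q * A * P) = mat_trace (P * (Q * A))"
    using mat_trace_mult_commute[of "Q * A" n n P] A P Q by simp
  also have "\<dots> = mat_trace A"
    using assoc_mult_mat[OF P Q A] PQ A by simp
  finally show ?thesis .
qed

lemma mult_mat_vec_inverse:
  assumes "A \<in> carrier_mat n n" "B \<in> carrier_mat n n" "A * B = 1\<^sub>m n" "v \<in> carrier_vec n"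
  shows "A *\<^sub>v (B *\<^sub>v v) = (v :: 'a::semiring_1 vec)"
  using assms by (metis assoc_mult_mat_vec one_mult_mat_vec)

lemma invertible_upper_triangular:
  fixes P :: "'a::field mat"
  assumes P: "P \<in> carrier_mat n n" and "upper_triangular P" and "\<And>k. k < n \<Longrightarrow> P $$ (k, k) \<noteq> 0"
  obtains Q where "Q \<in> carrier_mat n n" "P * Q = 1\<^sub>m n" "Q * P = 1\<^sub>m n"
proof -
  have "det P \<noteq> 0"
    using det_upper_triangular[OF assms(2) P] assms(3) P
    by (auto simp: prod_list_zero_iff diag_mat_def)
  from det_non_zero_imp_unit[OF P this, of "()"] that show ?thesis
    unfolding Units_def ring_mat_def by auto
qed

context
  fixes sc :: "'k::field \<Rightarrow> 'h::ring_1 \<Rightarrow> 'h" and n :: nat and \<rho> :: "'h \<Rightarrow> 'k mat" and P Q :: "'k mat"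
  assumes P: "P \<in> carrier_mat n n" and Q: "Q \<in> carrier_mat n n"
    and PQ: "P * Q = 1\<^sub>m n" and QP: "Q * P = 1\<^sub>m n"
begin

lemma cancel_conj: "X \<in> carrier_mat n m \<Longrightarrow> P * (Q * X) = X"
  using assoc_mult_mat[OF P Q, of X m] PQ by simp

lemmas conj_simps = assoc_mult_mat[of _ n n _ n _ n] mult_carrier_mat[of _ n n _ n] cancel_conj[of _ n]

lemma matrix_rep_conj:
  assumes rep: "matrix_rep sc n \<rho>"
  shows "matrix_rep sc n (\<lambda>h. Q * \<rho> h * P)"
  unfolding matrix_rep_def
proof (intro conjI allI)
  note c = rep_carrier[OF rep]
  fix x y
  show "Q * \<rho> (x * y) * P = Q * \<rho> x * P * (Q * \<rho> y * P)"
    using P Q c by (simp add: rep_mult[OF rep] conj_simps)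
  show "Q * \<rho> (x + y) * P = Q * \<rho> x * P + Q * \<rho> y * P"
    unfolding rep_add[OF rep] mult_add_distrib_mat[OF Q c c]
    using add_mult_distrib_mat[OF mult_carrier_mat[OF Q c] mult_carrier_mat[OF Q c] P] .
next
  note c = rep_carrier[OF rep]
  fix h a x
  show "Q * \<rho> h * P \<in> carrier_mat n n" using P Q c by auto
  show "Q * \<rho> (sc a x) * P = a \<cdot>\<^sub>m (Q * \<rho> x * P)"
    unfolding rep_scale[OF rep] mult_smult_distrib[OF Q c]
    using mult_smult_assoc_mat[OF mult_carrier_mat[OF Q c] P] .
  show "Q * \<rho> 1 * P = 1\<^sub>m n" using QP Q by (simp add: rep_one[OF rep])
qed

lemma irreducible_rep_conj:
  assumes irr: "irreducible_rep sc n \<rho>"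
  shows "irreducible_rep sc n (\<lambda>h. Q * \<rho> h * P)"
  unfolding irreducible_rep_def
proof (intro conjI allI impI)
  have rep: "matrix_rep sc n \<rho>" using irr by (rule irreducible_rep_matrix_rep)
  note c = rep_carrier[OF rep]
  show "matrix_rep sc n (\<lambda>h. Q * \<rho> h * P)" using rep by (rule matrix_rep_conj)
  show "0 < n" using irr by (rule irreducible_rep_dim_pos)
  fix U assume U: "subspace_vec n U" and inv: "\<forall>h. \<forall>u\<in>U. (Q * \<rho> h * P) *\<^sub>v u \<in> U"
  have Uc: "U \<subseteq> carrier_vec n" using U unfolding subspace_vec_def by blast
  have "(*\<^sub>v) P ` U = {0\<^sub>v n} \<or> (*\<^sub>v) P ` U = carrier_vec n"
  proof (rule irreducible_repD[OF irr subspace_vec_image[OF P U]])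
    fix h u assume "u \<in> (*\<^sub>v) P ` U"
    then obtain x where x: "x \<in> U" "x \<in> carrier_vec n" "u = P *\<^sub>v x" using Uc by blast
    have "\<rho> h *\<^sub>v u = P *\<^sub>v ((Q * \<rho> h * P) *\<^sub>v x)"
      using x Uc P Q c
      by (auto simp: conj_simps assoc_mult_mat_vec[of _ n n _ n] mult_mat_vec_inverse[OF P Q PQ]
          mult_mat_vec_carrier[of _ n n])
    then show "\<rho> h *\<^sub>v u \<in> (*\<^sub>v) P ` U" using inv x by blast
  qed
  moreover have "(*\<^sub>v) Q ` ((*\<^sub>v) P ` U) = U"
  proof -
    have "(*\<^sub>v) Q ` ((*\<^sub>v) P ` U) = (\<lambda>v. v) ` U"
      unfolding image_image by (rule image_cong) (use Uc mult_mat_vec_inverse[OF Q P QP] in auto)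
    then show ?thesis by simp
  qed
  moreover have "(*\<^sub>v) Q ` carrier_vec n = carrier_vec n"
  proof
    show "carrier_vec n \<subseteq> (*\<^sub>v) Q ` carrier_vec n"
      using mult_mat_vec_inverse[OF Q P QP] P by (metis image_eqI mult_mat_vec_carrier subsetI)
  qed (use Q in auto)
  moreover have "(*\<^sub>v) Q ` {0\<^sub>v n} = {0\<^sub>v n}" using Q by simp
  ultimately show "U = {0\<^sub>v n} \<or> U = carrier_vec n" by metis
qed

lemma iso_rep_conj: "iso_rep n \<rho> n (\<lambda>h. Q * \<rho> h * P)"
  unfolding iso_rep_def using P Q PQ QP by blast

end

section \<open>Orthogonal bases for anisotropic forms\<close>

definition orthogonal_unitriangular :: "('k::field vec \<Rightarrow> 'k vec \<Rightarrow> 'k) \<Rightarrow> nat \<Rightarrow> 'k vec list \<Rightarrow> bool"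
  where "orthogonal_unitriangular f n ws \<longleftrightarrow>
    (\<forall>j<length ws. ws!j \<in> carrier_vec n \<and> ws!j $ j = 1 \<and> (\<forall>i<n. j < i \<longrightarrow> ws!j $ i = 0)) \<and>
    (\<forall>j<length ws. \<forall>m<length ws. m \<noteq> j \<longrightarrow> f (ws!j) (ws!m) = 0)"

context
  fixes f :: "'k::field vec \<Rightarrow> 'k vec \<Rightarrow> 'k" and n :: nat
  assumes symm: "\<And>u v. u \<in> carrier_vec n \<Longrightarrow> v \<in> carrier_vec n \<Longrightarrow> f u v = f v u"
    and expand_left: "\<And>u v. u \<in> carrier_vec n \<Longrightarrow> v \<in> carrier_vec n \<Longrightarrow>
                        f u v = (\<Sum>p<n. u $ p * f (unit_vec n p) v)"
    and anisotropic: "\<And>w. w \<in> carrier_vec n \<Longrightarrow> f w w = 0 \<Longrightarrow> w = 0\<^sub>v n"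
begin

lemma orthogonal_unitriangularD:
  assumes "orthogonal_unitriangular f n ws" and "j < length ws"
  shows "ws!j \<in> carrier_vec n" "ws!j $ j = 1" "\<And>i. i < n \<Longrightarrow> j < i \<Longrightarrow> ws!j $ i = 0"
    and "\<And>m. m < length ws \<Longrightarrow> m \<noteq> j \<Longrightarrow> f (ws!j) (ws!m) = 0"
    and "j < n \<Longrightarrow> f (ws!j) (ws!j) \<noteq> 0"
  using assms anisotropic[of "ws!j"] unfolding orthogonal_unitriangular_def by auto

definition gram_schmidt_step :: "'k vec list \<Rightarrow> 'k vec" where
  "gram_schmidt_step ws = vec n (\<lambda>i. (if i = length ws then 1 else 0) -
     (\<Sum>j<length ws. f (unit_vec n (length ws)) (ws!j) / f (ws!j) (ws!j) * ws!j $ i))"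

lemma gram_schmidt_step_orthogonal:
  assumes ws: "orthogonal_unitriangular f n ws" and k: "length ws < n" and m: "m < length ws"
  shows "f (gram_schmidt_step ws) (ws!m) = 0"
proof -
  define k where "k = length ws"
  define cf where "cf j = f (unit_vec n k) (ws!j) / f (ws!j) (ws!j)" for j
  define F where "F p = f (unit_vec n p) (ws!m)" for p
  note tri = orthogonal_unitriangularD[OF ws]
  have expand_ws: "(\<Sum>p<n. ws!j $ p * F p) = f (ws!j) (ws!m)" if "j < k" for j
    unfolding F_def k_def using expand_left[OF tri(1) tri(1)[OF m]] that k_def by simp
  have w: "gram_schmidt_step ws \<in> carrier_vec n" by (simp add: gram_schmidt_step_def)
  have "f (gram_schmidt_step ws) (ws!m)
      = (\<Sum>p<n. (if p = k then F p else 0) - (\<Sum>j<k. cf j * (ws!j $ p * F p)))"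
    unfolding expand_left[OF w tri(1)[OF m]] F_def
    by (rule sum.cong[OF refl])
      (simp add: gram_schmidt_step_def k_def cf_def left_diff_distrib sum_distrib_right mult.assoc)
  also have "\<dots> = F k - (\<Sum>j<k. cf j * (\<Sum>p<n. ws!j $ p * F p))"
    using k unfolding k_def by (simp add: sum_subtractf sum_distrib_left sum.swap[of _ "{..<n}"])
  also have "(\<Sum>j<k. cf j * (\<Sum>p<n. ws!j $ p * F p))
      = (\<Sum>j<k. if j = m then cf m * f (ws!m) (ws!m) else 0)"
    by (rule sum.cong[OF refl]) (use tri(4)[OF _ m] m expand_ws in \<open>auto simp: k_def\<close>)
  also have "\<dots> = cf m * f (ws!m) (ws!m)" using m unfolding k_def by simp
  finally show ?thesis unfolding cf_def F_def using tri(5)[OF m] m k by simp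
qed

lemma orthogonal_unitriangular_snoc:
  assumes ws: "orthogonal_unitriangular f n ws" and k: "length ws < n"
  shows "orthogonal_unitriangular f n (ws @ [gram_schmidt_step ws])"
proof -
  let ?w = "gram_schmidt_step ws"
  note tri = orthogonal_unitriangularD[OF ws]
  have w: "?w \<in> carrier_vec n" "?w $ length ws = 1" "\<And>i. i < n \<Longrightarrow> length ws < i \<Longrightarrow> ?w $ i = 0"
    using k tri(3) unfolding gram_schmidt_step_def by auto
  show ?thesis
    unfolding orthogonal_unitriangular_def
  proof (intro conjI allI impI)
    fix j assume j: "j < length (ws @ [?w])"
    then show "(ws @ [?w])!j \<in> carrier_vec n" "(ws @ [?w])!j $ j = 1"
      using tri w by (auto simp: nth_append less_Suc_eq)
    show "(ws @ [?w])!j $ i = 0" if "i < n" "j < i" for i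
      using j that tri w by (auto simp: nth_append less_Suc_eq)
    fix m assume "m < length (ws @ [?w])" "m \<noteq> j"
    then show "f ((ws @ [?w])!j) ((ws @ [?w])!m) = 0"
      using j tri(4) gram_schmidt_step_orthogonal[OF ws k] symm[OF w(1) tri(1)]
      by (auto simp: nth_append less_Suc_eq)
  qed
qed

lemma exists_orthogonal_unitriangular: "\<exists>ws. length ws = n \<and> orthogonal_unitriangular f n ws"
proof -
  have "\<exists>ws. length ws = k \<and> orthogonal_unitriangular f n ws" if "k \<le> n" for k
    using that
  proof (induction k)
    case 0
    show ?case by (simp add: orthogonal_unitriangular_def)
  next
    case (Suc k)
    then obtain ws where "length ws = k" "orthogonal_unitriangular f n ws" by auto
    with Suc.prems orthogonal_unitriangular_snoc[of ws] show ?case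
      by (metis Suc_le_lessD length_append_singleton)
  qed
  then show ?thesis by blast
qed

end

section \<open>Schur orthogonality relations\<close>

context star_algebra
begin

text \<open>For fixed \<open>j, k\<close> the numbers \<open>schur_sum B \<rho>1 \<rho>2 i j k l\<close> are the entries of
  \<open>\<Sum>b\<in>B. \<rho>1 b E\<^sub>j\<^sub>k \<rho>2 (b\<^sup>*)\<close>, an intertwiner from \<open>\<rho>2\<close> to \<open>\<rho>1\<close>.\<close>
definition schur_sum :: "'h set \<Rightarrow> ('h \<Rightarrow> 'k mat) \<Rightarrow> ('h \<Rightarrow> 'k mat) \<Rightarrow> nat \<Rightarrow> nat \<Rightarrow> nat \<Rightarrow> nat \<Rightarrow> 'k"
  where "schur_sum B \<rho>1 \<rho>2 i j k l = (\<Sum>b\<in>B. \<rho>1 b $$ (i, j) * \<rho>2 (st b) $$ (k, l))"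

lemma schur_sum_intertwines:
  assumes B: "star_sym_basis sc \<tau> st B" and rep1: "matrix_rep sc n1 \<rho>1" and rep2: "matrix_rep sc n2 \<rho>2"
    and j: "j < n1" and k: "k < n2"
  defines "M \<equiv> mat n1 n2 (\<lambda>(i, l). schur_sum B \<rho>1 \<rho>2 i j k l)"
  shows "\<rho>1 h * M = M * \<rho>2 h"
proof (rule eq_matI)
  fix i l assume "i < dim_row (M * \<rho>2 h)" "l < dim_col (M * \<rho>2 h)"
  then have i: "i < n1" and l: "l < n2" using rep_dims[OF rep2] by (auto simp: M_def)
  have "(\<rho>1 h * M) $$ (i, l) = (\<Sum>p<n1. \<Sum>b\<in>B. \<rho>1 h $$ (i, p) * \<rho>1 b $$ (p, j) * \<rho>2 (st b) $$ (k, l))"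
    using i l rep_dims[OF rep1]
    by (simp add: M_def schur_sum_def scalar_prod_def atLeast0LessThan sum_distrib_left mult.assoc)
  also have "\<dots> = (\<Sum>b\<in>B. \<rho>1 (h * b) $$ (i, j) * \<rho>2 (st b) $$ (k, l))"
    by (subst sum.swap) (simp add: rep_mult_entry[OF rep1 i j] sum_distrib_right)
  also have "\<dots> = (\<Sum>b\<in>B. \<rho>1 b $$ (i, j) * \<rho>2 (st b * h) $$ (k, l))"
    by (rule basis_pairing_mult_left[OF B linear_form_rep_entry[OF rep1 i j] linear_form_rep_entry[OF rep2 k l]])
  also have "\<dots> = (\<Sum>q<n2. \<Sum>b\<in>B. \<rho>1 b $$ (i, j) * \<rho>2 (st b) $$ (k, q) * \<rho>2 h $$ (q, l))"
    by (subst sum.swap) (simp add: rep_mult_entry[OF rep2 k l] sum_distrib_left mult.assoc)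
  also have "\<dots> = (M * \<rho>2 h) $$ (i, l)"
    using i l rep_dims[OF rep2]
    by (simp add: M_def schur_sum_def scalar_prod_def atLeast0LessThan sum_distrib_right)
  finally show "(\<rho>1 h * M) $$ (i, l) = (M * \<rho>2 h) $$ (i, l)" .
qed (use rep_dims[OF rep1] rep_dims[OF rep2] in \<open>auto simp: M_def\<close>)

lemma schur_sum_swap:
  assumes "star_sym_basis sc \<tau> st B"
  shows "schur_sum B \<rho> \<rho> i j k l = schur_sum B \<rho> \<rho> k l i j"
  unfolding schur_sum_def
  using sum_basis_star[OF assms, of "\<lambda>b. \<rho> b $$ (k, l) * \<rho> (st b) $$ (i, j)"]
  by (simp add: mult.commute)

lemma schur_sum_noniso:
  assumes B: "star_sym_basis sc \<tau> st B"
    and irr1: "irreducible_rep sc n1 \<rho>1" and irr2: "irreducible_rep sc n2 \<rho>2"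
    and noniso: "\<not> iso_rep n1 \<rho>1 n2 \<rho>2"
    and idx: "i < n1" "j < n1" "k < n2" "l < n2"
  shows "schur_sum B \<rho>1 \<rho>2 i j k l = 0"
proof -
  let ?M = "mat n1 n2 (\<lambda>(i, l). schur_sum B \<rho>1 \<rho>2 i j k l)"
  have "?M = 0\<^sub>m n1 n2"
  proof (rule ccontr)
    assume "?M \<noteq> 0\<^sub>m n1 n2"
    with schur_iso[OF irr1 irr2 _ schur_sum_intertwines[OF B irreducible_rep_matrix_rep[OF irr1]
          irreducible_rep_matrix_rep[OF irr2] idx(2,3)]]
    have "iso_rep n1 \<rho>1 n2 \<rho>2" by simp
    with noniso show False ..
  qed
  then have "?M $$ (i, l) = 0" using idx by simp
  then show ?thesis using idx by simp
qed

lemma schur_sum_split: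
  assumes B: "star_sym_basis sc \<tau> st B" and split: "split_alg sc" and irr: "irreducible_rep sc n \<rho>"
  obtains \<sigma> where "\<And>i j k l. i < n \<Longrightarrow> j < n \<Longrightarrow> k < n \<Longrightarrow> l < n \<Longrightarrow>
           schur_sum B \<rho> \<rho> i j k l = (if i = l \<and> j = k then \<sigma> else 0)"
proof -
  have rep: "matrix_rep sc n \<rho>" and n: "0 < n" using irr unfolding irreducible_rep_def by auto
  have scalar: "\<exists>a. \<forall>i<n. \<forall>l<n. schur_sum B \<rho> \<rho> i j k l = (if i = l then a else 0)"
    if "j < n" "k < n" for j k
  proof -
    let ?M = "mat n n (\<lambda>(i, l). schur_sum B \<rho> \<rho> i j k l)"
    have "\<forall>h. ?M * \<rho> h = \<rho> h * ?M" using schur_sum_intertwines[OF B rep rep that] by simp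
    moreover have "?M \<in> carrier_mat n n" by simp
    ultimately obtain a where a: "?M = a \<cdot>\<^sub>m 1\<^sub>m n" using split irr unfolding split_alg_def by blast
    have "schur_sum B \<rho> \<rho> i j k l = (if i = l then a else 0)" if "i < n" "l < n" for i l
    proof -
      have "?M $$ (i, l) = (a \<cdot>\<^sub>m 1\<^sub>m n) $$ (i, l)" by (simp only: a)
      then show ?thesis using that by simp
    qed
    then show ?thesis by blast
  qed
  define s where "s j k = (SOME a. \<forall>i<n. \<forall>l<n. schur_sum B \<rho> \<rho> i j k l = (if i = l then a else 0))"
    for j k
  have s: "schur_sum B \<rho> \<rho> i j k l = (if i = l then s j k else 0)"
    if "i < n" "j < n" "k < n" "l < n" for i j k l
    using someI_ex[OF scalar[OF that(2,3)]] that unfolding s_def by blast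
  txt \<open>Symmetry of \<open>schur_sum\<close> forces \<open>s j k = 0\<close> for \<open>j \<noteq> k\<close> and makes \<open>s j j\<close> constant.\<close>
  have s_diag: "s j j = s i i" if "i < n" "j < n" for i j
    using s[of i j j i] s[of j i i j] schur_sum_swap[OF B, of \<rho> i j j i] that by simp
  show ?thesis
  proof (rule that[of "s 0 0"])
    fix i j k l assume idx: "i < n" "j < n" "k < n" "l < n"
    then show "schur_sum B \<rho> \<rho> i j k l = (if i = l \<and> j = k then s 0 0 else 0)"
      using s[OF idx] s[of k l i j] schur_sum_swap[OF B, of \<rho> i j k l] s_diag[of 0 j] n
      by (cases "i = l") auto
  qed
qed

lemma schur_sum_trace:
  "(\<Sum>i<n. \<Sum>k<n. schur_sum B \<rho> \<rho> i i k k)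
     = (\<Sum>b\<in>B. (\<Sum>i<n. \<rho> b $$ (i, i)) * (\<Sum>k<n. \<rho> (st b) $$ (k, k)))"
proof -
  have "(\<Sum>i<n. \<Sum>k<n. schur_sum B \<rho> \<rho> i i k k)
      = (\<Sum>i<n. \<Sum>b\<in>B. \<Sum>k<n. \<rho> b $$ (i, i) * \<rho> (st b) $$ (k, k))"
    unfolding schur_sum_def by (rule sum.cong[OF refl], rule sum.swap)
  also have "\<dots> = (\<Sum>b\<in>B. \<Sum>i<n. \<Sum>k<n. \<rho> b $$ (i, i) * \<rho> (st b) $$ (k, k))"
    by (rule sum.swap)
  finally show ?thesis by (simp only: sum_product)
qed

text \<open>Conjugation does not change the trace, and for split irreducible representations
  the Schur constant is determined by traces as long as \<open>n\<close> is invertible in the field.\<close>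
lemma schur_sum_conj:
  assumes B: "star_sym_basis sc \<tau> st B" and split: "split_alg sc" and irr: "irreducible_rep sc n \<rho>"
    and n: "of_nat n \<noteq> (0 :: 'k)"
    and c: "\<And>i j k l. i < n \<Longrightarrow> j < n \<Longrightarrow> k < n \<Longrightarrow> l < n \<Longrightarrow>
              schur_sum B \<rho> \<rho> i j k l = (if i = l \<and> j = k then c else 0)"
    and P: "P \<in> carrier_mat n n" and Q: "Q \<in> carrier_mat n n"
    and PQ: "P * Q = 1\<^sub>m n" and QP: "Q * P = 1\<^sub>m n"
    and idx: "i < n" "j < n" "k < n" "l < n"
  shows "schur_sum B (\<lambda>h. Q * \<rho> h * P) (\<lambda>h. Q * \<rho> h * P) i j k l = (if i = l \<and> j = k then c else 0)"
proof -
  let ?\<rho>' = "\<lambda>h. Q * \<rho> h * P"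
  have irr': "irreducible_rep sc n ?\<rho>'" using irreducible_rep_conj[OF P Q PQ QP irr] .
  obtain \<sigma> where \<sigma>: "\<And>i j k l. i < n \<Longrightarrow> j < n \<Longrightarrow> k < n \<Longrightarrow> l < n \<Longrightarrow>
      schur_sum B ?\<rho>' ?\<rho>' i j k l = (if i = l \<and> j = k then \<sigma> else 0)"
    using schur_sum_split[OF B split irr'] by blast
  have diag_sum: "(\<Sum>i<n. \<Sum>k<n. f i k) = of_nat n * x"
    if "\<And>i k. i < n \<Longrightarrow> k < n \<Longrightarrow> f i k = (if k = i then x else 0)" for f and x :: 'k
    using that by simp
  have rep: "matrix_rep sc n \<rho>" using irr by (rule irreducible_rep_matrix_rep)
  have "(\<Sum>i<n. ?\<rho>' h $$ (i, i)) = (\<Sum>i<n. \<rho> h $$ (i, i))" for h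
    using mat_trace_conj[OF rep_carrier[OF rep] P Q PQ] P Q
    by (simp add: mat_trace_def rep_dims[OF rep])
  then have "(\<Sum>i<n. \<Sum>k<n. schur_sum B ?\<rho>' ?\<rho>' i i k k) = (\<Sum>i<n. \<Sum>k<n. schur_sum B \<rho> \<rho> i i k k)"
    unfolding schur_sum_trace by simp
  moreover have "(\<Sum>i<n. \<Sum>k<n. schur_sum B ?\<rho>' ?\<rho>' i i k k) = of_nat n * \<sigma>"
    by (rule diag_sum) (simp add: \<sigma>)
  moreover have "(\<Sum>i<n. \<Sum>k<n. schur_sum B \<rho> \<rho> i i k k) = of_nat n * c"
    by (rule diag_sum) (simp add: c)
  ultimately have "of_nat n * \<sigma> = of_nat n * c" by simp
  then show ?thesis using n \<sigma>[OF idx] by simp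
qed

end

section \<open>The invariant form\<close>

context star_algebra
begin

definition inv_form :: "'h set \<Rightarrow> nat \<Rightarrow> ('h \<Rightarrow> 'k mat) \<Rightarrow> 'k vec \<Rightarrow> 'k vec \<Rightarrow> 'k"
  where "inv_form B n \<rho> u v = (\<Sum>b\<in>B. \<Sum>i<n. (\<rho> b *\<^sub>v u) $ i * (\<rho> b *\<^sub>v v) $ i)"

lemma inv_form_commute: "inv_form B n \<rho> u v = inv_form B n \<rho> v u"
  unfolding inv_form_def by (simp add: mult.commute)

context
  fixes B n \<rho>
  assumes basis: "star_sym_basis sc \<tau> st B" and rep: "matrix_rep sc n \<rho>"
begin

lemma inv_form_add_left:
  assumes "u \<in> carrier_vec n" "v \<in> carrier_vec n"
  shows "inv_form B n \<rho> (u + v) w = inv_form B n \<rho> u w + inv_form B n \<rho> v w"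
proof -
  have "(\<rho> b *\<^sub>v (u + v)) $ i = (\<rho> b *\<^sub>v u) $ i + (\<rho> b *\<^sub>v v) $ i" if "i < n" for b i
    using mult_add_distrib_mat_vec[OF rep_carrier[OF rep] assms] that by (simp add: rep_dims[OF rep])
  then show ?thesis unfolding inv_form_def by (simp add: distrib_right sum.distrib)
qed

lemma inv_form_smult_left:
  assumes "u \<in> carrier_vec n"
  shows "inv_form B n \<rho> (a \<cdot>\<^sub>v u) w = a * inv_form B n \<rho> u w"
proof -
  have "(\<rho> b *\<^sub>v (a \<cdot>\<^sub>v u)) $ i = a * (\<rho> b *\<^sub>v u) $ i" if "i < n" for b i
    using mult_mat_vec[OF rep_carrier[OF rep] assms] that by (simp add: rep_dims[OF rep])
  then show ?thesis unfolding inv_form_def by (simp add: sum_distrib_left mult.assoc)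
qed

lemma inv_form_smult_right:
  assumes "u \<in> carrier_vec n"
  shows "inv_form B n \<rho> w (a \<cdot>\<^sub>v u) = a * inv_form B n \<rho> w u"
  using inv_form_smult_left[OF assms] by (simp add: inv_form_commute)

lemma inv_form_invariant:
  assumes v: "v \<in> carrier_vec n" and w: "w \<in> carrier_vec n"
  shows "inv_form B n \<rho> (\<rho> (st h) *\<^sub>v v) w = inv_form B n \<rho> v (\<rho> h *\<^sub>v w)"
proof -
  have "inv_form B n \<rho> (\<rho> (st h) *\<^sub>v v) w = (\<Sum>i<n. \<Sum>b\<in>B. (\<rho> (b * st h) *\<^sub>v v) $ i * (\<rho> b *\<^sub>v w) $ i)"
    unfolding inv_form_def rep_mult_vec[OF rep v] by (rule sum.swap)
  also have "\<dots> = (\<Sum>i<n. \<Sum>b\<in>B. (\<rho> b *\<^sub>v v) $ i * (\<rho> (b * h) *\<^sub>v w) $ i)"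
    by (rule sum.cong[OF refl], rule basis_pairing_mult_right[OF basis])
      (simp_all add: linear_form_rep_vec[OF rep v] linear_form_rep_vec[OF rep w])
  also have "\<dots> = inv_form B n \<rho> v (\<rho> h *\<^sub>v w)"
    unfolding inv_form_def rep_mult_vec[OF rep w] by (rule sum.swap)
  finally show ?thesis .
qed

lemma inv_form_expand_left:
  assumes u: "u \<in> carrier_vec n"
  shows "inv_form B n \<rho> u v = (\<Sum>p<n. u $ p * inv_form B n \<rho> (unit_vec n p) v)"
proof -
  have "inv_form B n \<rho> u v = (\<Sum>b\<in>B. \<Sum>i<n. \<Sum>p<n. u $ p * (\<rho> b $$ (i, p) * (\<rho> b *\<^sub>v v) $ i))"
    unfolding inv_form_def using u rep_dims[OF rep]
    by (intro sum.cong refl)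
      (simp add: rep_mult_vec_index[OF rep u] sum_distrib_right sum_distrib_left ac_simps
        del: index_mult_mat_vec)
  also have "\<dots> = (\<Sum>p<n. \<Sum>b\<in>B. \<Sum>i<n. u $ p * (\<rho> b $$ (i, p) * (\<rho> b *\<^sub>v v) $ i))"
    by (subst sum.swap) (rule sum.cong[OF refl], rule sum.swap)
  also have "\<dots> = (\<Sum>p<n. u $ p * inv_form B n \<rho> (unit_vec n p) v)"
    unfolding inv_form_def using rep_dims[OF rep] by (intro sum.cong refl) (simp add: sum_distrib_left)
  finally show ?thesis .
qed

lemma inv_form_sum_squares:
  obtains xs where "inv_form B n \<rho> w w = sum_squares xs"
    and "set xs = (\<lambda>(b, i). (\<rho> b *\<^sub>v w) $ i) ` (B \<times> {..<n})"
proof -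
  have "inv_form B n \<rho> w w = (\<Sum>x\<in>B \<times> {..<n}. ((\<lambda>(b, i). (\<rho> b *\<^sub>v w) $ i) x)^2)"
    unfolding inv_form_def
    by (simp add: sum.cartesian_product power2_eq_square case_prod_beta del: index_mult_mat_vec)
  then show ?thesis
    using sum_squares_of_set[of "B \<times> {..<n}" "\<lambda>(b, i). (\<rho> b *\<^sub>v w) $ i"] finite_basis[OF basis] that
    by auto
qed

lemma vec_eq_0_if_orbit_0:
  assumes w: "w \<in> carrier_vec n" and orbit: "\<And>b i. b \<in> B \<Longrightarrow> i < n \<Longrightarrow> (\<rho> b *\<^sub>v w) $ i = 0"
  shows "w = 0\<^sub>v n"
proof (rule eq_vecI)
  fix i assume "i < dim_vec (0\<^sub>v n :: 'k vec)"
  then have i: "i < n" by simp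
  have "w $ i = (\<rho> 1 *\<^sub>v w) $ i" using w by (simp add: rep_one[OF rep])
  also have "\<dots> = (\<Sum>b\<in>B. \<tau> (1 * st b) * (\<rho> b *\<^sub>v w) $ i)"
    by (rule dual_basis_expansion[OF basis linear_form_rep_vec[OF rep w i]])
  also have "\<dots> = 0" using orbit i by simp
  finally show "w $ i = 0\<^sub>v n $ i" using i by simp
qed (use w in simp)

lemma inv_form_mult_mat_vec_col:
  assumes P: "P \<in> carrier_mat n n" and z: "z \<in> carrier_vec n" and m: "m < n"
    and orth: "\<And>k. k < n \<Longrightarrow> k \<noteq> m \<Longrightarrow> inv_form B n \<rho> (col P k) (col P m) = 0"
  shows "inv_form B n \<rho> (P *\<^sub>v z) (col P m) = z $ m * inv_form B n \<rho> (col P m) (col P m)"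
proof -
  define F where "F p = inv_form B n \<rho> (unit_vec n p) (col P m)" for p
  have "inv_form B n \<rho> (P *\<^sub>v z) (col P m) = (\<Sum>p<n. \<Sum>r<n. z $ r * (P $$ (p, r) * F p))"
    unfolding F_def using P z
    by (subst inv_form_expand_left) (auto intro!: sum.cong simp: scalar_prod_def atLeast0LessThan
        sum_distrib_right sum_distrib_left ac_simps)
  also have "\<dots> = (\<Sum>r<n. z $ r * (\<Sum>p<n. col P r $ p * F p))"
    using P by (subst sum.swap) (simp add: sum_distrib_left)
  also have "\<dots> = (\<Sum>r<n. z $ r * inv_form B n \<rho> (col P r) (col P m))"
    unfolding F_def using P m by (intro sum.cong refl) (simp add: inv_form_expand_left[of "col P _"])
  also have "\<dots> = z $ m * inv_form B n \<rho> (col P m) (col P m)"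
    using m orth by (simp add: sum.remove[of _ m] sum.neutral)
  finally show ?thesis .
qed

lemma sum_of_squares_inv_form: "sum_of_squares (inv_form B n \<rho> w w)"
  using inv_form_sum_squares unfolding sum_of_squares_def by metis

context
  fixes \<nu> :: "'k \<Rightarrow> 'g::linordered_ab_group_add"
  assumes valuation: "is_valuation \<nu>" and formally_real: "residue_formally_real \<nu>"
begin

lemma inv_form_eq_0_iff:
  assumes w: "w \<in> carrier_vec n"
  shows "inv_form B n \<rho> w w = 0 \<longleftrightarrow> w = 0\<^sub>v n"
proof
  obtain xs where xs: "inv_form B n \<rho> w w = sum_squares xs"
    "set xs = (\<lambda>(b, i). (\<rho> b *\<^sub>v w) $ i) ` (B \<times> {..<n})"
    by (rule inv_form_sum_squares)
  assume "inv_form B n \<rho> w w = 0"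
  then have "\<forall>x\<in>set xs. x = 0" using sum_squares_eq_0_iff[OF valuation formally_real] xs(1) by simp
  then show "w = 0\<^sub>v n" using vec_eq_0_if_orbit_0[OF w] xs(2) by force
next
  assume "w = 0\<^sub>v n"
  then show "inv_form B n \<rho> w w = 0"
    unfolding inv_form_def by (simp add: mult_mat_vec_zero[OF rep_carrier[OF rep]])
qed

lemma val_inv_form_in_two_Gamma:
  assumes "w \<in> carrier_vec n" "w \<noteq> 0\<^sub>v n"
  shows "in_two_Gamma (\<nu> (inv_form B n \<rho> w w))"
proof -
  obtain xs where "inv_form B n \<rho> w w = sum_squares xs" by (rule inv_form_sum_squares)
  then show ?thesis
    using inv_form_eq_0_iff[OF assms(1)] assms(2) val_sum_squares_in_two_Gamma[OF valuation formally_real]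
    by simp
qed

end
end
end

section \<open>Balanced representations\<close>

context star_algebra
begin

lemma rep_one_entry_schur_sum:
  assumes B: "star_sym_basis sc \<tau> st B" and rep: "matrix_rep sc n \<rho>"
    and reps: "\<forall>\<mu>\<in>\<Lambda>. matrix_rep sc (d \<mu>) (\<rho>s \<mu>)"
    and schur: "\<forall>h. \<tau> h = (\<Sum>\<mu>\<in>\<Lambda>. inverse (c \<mu>) * mat_trace (\<rho>s \<mu> h))"
    and ij: "i < n" "j < n"
  shows "\<rho> 1 $$ (i, j) = (\<Sum>\<mu>\<in>\<Lambda>. inverse (c \<mu>) * (\<Sum>p<d \<mu>. schur_sum B \<rho> (\<rho>s \<mu>) i j p p))"
proof -
  have trace: "mat_trace (\<rho>s \<mu> h) = (\<Sum>p<d \<mu>. \<rho>s \<mu> h $$ (p, p))" if "\<mu> \<in> \<Lambda>" for \<mu> h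
    using rep_dims[of sc "d \<mu>" "\<rho>s \<mu>"] reps that by (simp add: mat_trace_def)
  have "\<rho> 1 $$ (i, j) = (\<Sum>b\<in>B. \<tau> (1 * st b) * \<rho> b $$ (i, j))"
    by (rule dual_basis_expansion[OF B linear_form_rep_entry[OF rep ij]])
  also have "\<dots> = (\<Sum>b\<in>B. \<Sum>\<mu>\<in>\<Lambda>. \<Sum>p<d \<mu>. inverse (c \<mu>) * (\<rho> b $$ (i, j) * \<rho>s \<mu> (st b) $$ (p, p)))"
    using schur trace by (simp add: sum_distrib_right sum_distrib_left ac_simps cong: sum.cong)
  also have "\<dots> = (\<Sum>\<mu>\<in>\<Lambda>. inverse (c \<mu>) * (\<Sum>p<d \<mu>. schur_sum B \<rho> (\<rho>s \<mu>) i j p p))"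
    unfolding schur_sum_def sum_distrib_left
    by (subst sum.swap) (rule sum.cong[OF refl], rule sum.swap)
  finally show ?thesis .
qed

lemma schur_sum_schur_element:
  assumes B: "star_sym_basis sc \<tau> st B" and split: "split_alg sc" and fin: "finite \<Lambda>"
    and irr: "\<forall>\<mu>\<in>\<Lambda>. irreducible_rep sc (d \<mu>) (\<rho>s \<mu>)"
    and noniso: "\<forall>\<mu>\<in>\<Lambda>. \<forall>\<mu>'\<in>\<Lambda>. iso_rep (d \<mu>) (\<rho>s \<mu>) (d \<mu>') (\<rho>s \<mu>') \<longrightarrow> \<mu> = \<mu>'"
    and schur: "\<forall>h. \<tau> h = (\<Sum>\<mu>\<in>\<Lambda>. inverse (c \<mu>) * mat_trace (\<rho>s \<mu> h))"
    and l: "l \<in> \<Lambda>" and c: "c l \<noteq> 0"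
    and idx: "i < d l" "j < d l" "k < d l" "m < d l"
  shows "schur_sum B (\<rho>s l) (\<rho>s l) i j k m = (if i = m \<and> j = k then c l else 0)"
proof -
  have irr_l: "irreducible_rep sc (d l) (\<rho>s l)" using irr l by blast
  have reps: "\<forall>\<mu>\<in>\<Lambda>. matrix_rep sc (d \<mu>) (\<rho>s \<mu>)" using irr irreducible_rep_matrix_rep by blast
  have d: "0 < d l" using irr_l by (rule irreducible_rep_dim_pos)
  obtain \<sigma> where \<sigma>: "\<And>i j k m. i < d l \<Longrightarrow> j < d l \<Longrightarrow> k < d l \<Longrightarrow> m < d l \<Longrightarrow>
      schur_sum B (\<rho>s l) (\<rho>s l) i j k m = (if i = m \<and> j = k then \<sigma> else 0)"
    using schur_sum_split[OF B split irr_l] by blast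
  have summand: "(\<Sum>p<d \<mu>. schur_sum B (\<rho>s l) (\<rho>s \<mu>) 0 0 p p) = (if \<mu> = l then \<sigma> else 0)"
    if \<mu>: "\<mu> \<in> \<Lambda>" for \<mu>
  proof (cases "\<mu> = l")
    case True
    then have "(\<Sum>p<d \<mu>. schur_sum B (\<rho>s l) (\<rho>s \<mu>) 0 0 p p) = (\<Sum>p<d l. if p = 0 then \<sigma> else 0)"
      using \<sigma> d by (intro sum.cong) auto
    then show ?thesis using True d by simp
  next
    case False
    then have "\<not> iso_rep (d l) (\<rho>s l) (d \<mu>) (\<rho>s \<mu>)" using noniso l \<mu> by blast
    moreover have "irreducible_rep sc (d \<mu>) (\<rho>s \<mu>)" using irr \<mu> by blast
    ultimately show ?thesis
      using schur_sum_noniso[OF B irr_l _ _ d d] False by (simp add: sum.neutral)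
  qed
  have "1 = \<rho>s l 1 $$ (0, 0)" using d by (simp add: rep_one[OF reps[rule_format, OF l]])
  also have "\<dots> = (\<Sum>\<mu>\<in>\<Lambda>. inverse (c \<mu>) * (\<Sum>p<d \<mu>. schur_sum B (\<rho>s l) (\<rho>s \<mu>) 0 0 p p))"
    by (rule rep_one_entry_schur_sum[OF B reps[rule_format, OF l] reps schur d d])
  also have "\<dots> = (\<Sum>\<mu>\<in>\<Lambda>. if \<mu> = l then inverse (c l) * \<sigma> else 0)"
    by (rule sum.cong) (simp_all add: summand)
  also have "\<dots> = inverse (c l) * \<sigma>" using fin l by simp
  finally have "\<sigma> = c l" using c by (simp add: field_simps)
  then show ?thesis using \<sigma>[OF idx] by simp
qed

context
  fixes \<nu> :: "'k \<Rightarrow> 'g::linordered_ab_group_add" and n :: nat and \<rho> :: "'h \<Rightarrow> 'k mat"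
    and B0 :: "'h set"
  assumes val: "surjective_valuation \<nu>" and formally_real: "residue_formally_real \<nu>"
    and rep: "matrix_rep sc n \<rho>" and B0: "star_sym_basis sc \<tau> st B0"
begin

private lemma valuation: "is_valuation \<nu>"
  using val unfolding surjective_valuation_def by blast

text \<open>The columns of \<open>P\<close> are rescaled Gram--Schmidt vectors; rescaling to valuation \<open>0\<close>
  is possible because all lengths lie in \<open>2\<Gamma>\<close>.\<close>
lemma exists_unit_orthogonal_frame:
  obtains P Q where "P \<in> carrier_mat n n" "Q \<in> carrier_mat n n" "P * Q = 1\<^sub>m n" "Q * P = 1\<^sub>m n"
    and "\<And>k m. k < n \<Longrightarrow> m < n \<Longrightarrow> k \<noteq> m \<Longrightarrow> inv_form B0 n \<rho> (col P k) (col P m) = 0"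
    and "\<And>k. k < n \<Longrightarrow> inv_form B0 n \<rho> (col P k) (col P k) \<noteq> 0"
    and "\<And>k. k < n \<Longrightarrow> \<nu> (inv_form B0 n \<rho> (col P k) (col P k)) = 0"
proof -
  let ?f = "inv_form B0 n \<rho>"
  obtain ws where "length ws = n" and ws: "orthogonal_unitriangular ?f n ws"
    using exists_orthogonal_unitriangular[of n ?f] inv_form_commute inv_form_expand_left[OF B0 rep]
      inv_form_eq_0_iff[OF B0 rep valuation formally_real] by blast
  then have ws_carrier: "ws!k \<in> carrier_vec n" and ws_diag: "ws!k $ k = 1"
    and ws_tri: "\<And>i. i < n \<Longrightarrow> k < i \<Longrightarrow> ws!k $ i = 0"
    and ws_orth: "\<And>m. m < n \<Longrightarrow> m \<noteq> k \<Longrightarrow> ?f (ws!k) (ws!m) = 0" if "k < n" for k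
    using that unfolding orthogonal_unitriangular_def by auto
  have ws_nz: "?f (ws!k) (ws!k) \<noteq> 0" and ws_val: "in_two_Gamma (\<nu> (?f (ws!k) (ws!k)))"
    if "k < n" for k
    using inv_form_eq_0_iff[OF B0 rep valuation formally_real ws_carrier[OF that]]
      val_inv_form_in_two_Gamma[OF B0 rep valuation formally_real ws_carrier[OF that]]
      ws_diag[OF that] that by auto
  have "\<forall>k\<in>{..<n}. \<exists>t. t \<noteq> 0 \<and> \<nu> (t^2 * ?f (ws!k) (ws!k)) = 0"
    using exists_scaling_to_val_0[OF val ws_nz ws_val] by (metis lessThan_iff)
  then obtain t where t: "\<And>k. k < n \<Longrightarrow> t k \<noteq> 0 \<and> \<nu> (t k ^2 * ?f (ws!k) (ws!k)) = 0"
    by (metis bchoice lessThan_iff)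
  define P where "P = mat n n (\<lambda>(i, k). t k * ws!k $ i)"
  have P: "P \<in> carrier_mat n n" unfolding P_def by simp
  have col_P: "col P k = t k \<cdot>\<^sub>v ws!k" if "k < n" for k
    using ws_carrier[OF that] that by (auto simp: P_def)
  have col_P_form: "?f (col P k) (col P m) = t k * t m * ?f (ws!k) (ws!m)" if "k < n" "m < n" for k m
    using that ws_carrier
    by (simp add: col_P inv_form_smult_left[OF B0 rep] inv_form_smult_right[OF B0 rep])
  obtain Q where "Q \<in> carrier_mat n n" "P * Q = 1\<^sub>m n" "Q * P = 1\<^sub>m n"
  proof (rule invertible_upper_triangular[OF P])
    show "upper_triangular P" using ws_tri unfolding upper_triangular_def P_def by auto
    show "P $$ (k, k) \<noteq> 0" if "k < n" for k using that t ws_diag by (simp add: P_def)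
  qed
  then show ?thesis
    using that[OF P] col_P_form ws_orth ws_nz t by (auto simp: power2_eq_square ac_simps)
qed

context
  fixes c :: 'k and P Q :: "'k mat"
  assumes split: "split_alg sc" and irr: "irreducible_rep sc n \<rho>" and c_nz: "c \<noteq> 0"
    and schur_rel: "\<And>B i j k l. star_sym_basis sc \<tau> st B \<Longrightarrow> i < n \<Longrightarrow> j < n \<Longrightarrow> k < n \<Longrightarrow> l < n \<Longrightarrow>
                      schur_sum B \<rho> \<rho> i j k l = (if i = l \<and> j = k then c else 0)"
    and P: "P \<in> carrier_mat n n" and Q: "Q \<in> carrier_mat n n" and PQ: "P * Q = 1\<^sub>m n" and QP: "Q * P = 1\<^sub>m n"
    and orth: "\<And>k m. k < n \<Longrightarrow> m < n \<Longrightarrow> k \<noteq> m \<Longrightarrow> inv_form B0 n \<rho> (col P k) (col P m) = 0"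
    and len_nz: "\<And>k. k < n \<Longrightarrow> inv_form B0 n \<rho> (col P k) (col P k) \<noteq> 0"
    and len_val: "\<And>k. k < n \<Longrightarrow> \<nu> (inv_form B0 n \<rho> (col P k) (col P k)) = 0"
begin

private abbreviation "\<rho>' h \<equiv> Q * \<rho> h * P"
private abbreviation "len k \<equiv> inv_form B0 n \<rho> (col P k) (col P k)"

private lemma rep': "\<rho>' h \<in> carrier_mat n n"
  using P Q rep_carrier[OF rep] by auto

private lemma col_frame_action:
  assumes "j < n"
  shows "\<rho> h *\<^sub>v col P j = P *\<^sub>v col (\<rho>' h) j"
proof -
  have "P * \<rho>' h = \<rho> h * P"
    using P Q rep_carrier[OF rep] by (simp add: conj_simps[OF P Q PQ QP])
  have "\<rho> h *\<^sub>v col P j = col (\<rho> h * P) j" by (rule col_mult2[OF rep_carrier[OF rep] P assms, symmetric])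
  also have "\<dots> = col (P * \<rho>' h) j" by (simp only: \<open>P * \<rho>' h = \<rho> h * P\<close>)
  also have "\<dots> = P *\<^sub>v col (\<rho>' h) j" by (rule col_mult2[OF P rep' assms])
  finally show ?thesis .
qed

private lemma form_frame_action:
  assumes "j < n" "i < n"
  shows "inv_form B0 n \<rho> (\<rho> h *\<^sub>v col P j) (col P i) = \<rho>' h $$ (i, j) * len i"
proof -
  have "inv_form B0 n \<rho> (\<rho> h *\<^sub>v col P j) (col P i) = col (\<rho>' h) j $ i * len i"
    unfolding col_frame_action[OF assms(1)]
    by (rule inv_form_mult_mat_vec_col[OF B0 rep P _ assms(2)]) (use rep' orth assms in auto)
  also have "col (\<rho>' h) j $ i = \<rho>' h $$ (i, j)"
    by (rule index_col) (use rep'[of h] assms in auto)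
  finally show ?thesis .
qed

text \<open>In the orthogonal frame the invariance of the form says that \<open>\<rho>' (h\<^sup>*)\<close> is the
  transpose of \<open>\<rho>' h\<close> up to the diagonal matrix of lengths.\<close>
lemma conj_rep_star_entry:
  assumes i: "i < n" and j: "j < n"
  shows "\<rho>' (st h) $$ (i, j) * len i = len j * \<rho>' h $$ (j, i)"
proof -
  have "\<rho>' (st h) $$ (i, j) * len i = inv_form B0 n \<rho> (\<rho> (st h) *\<^sub>v col P j) (col P i)"
    using form_frame_action[OF j i] ..
  also have "\<dots> = inv_form B0 n \<rho> (\<rho> h *\<^sub>v col P i) (col P j)"
    using inv_form_invariant[OF B0 rep] inv_form_commute P i j by simp
  also have "\<dots> = len j * \<rho>' h $$ (j, i)"
    using form_frame_action[OF i j] by (simp add: mult.commute)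
  finally show ?thesis .
qed

lemma schur_element_frame_identity:
  assumes B: "star_sym_basis sc \<tau> st B" and i: "i < n" and j: "j < n"
  shows "c * len j = len i * (\<Sum>b\<in>B. (\<rho>' b $$ (i, j))^2)"
proof -
  have "of_nat n \<noteq> (0 :: 'k)"
    using of_nat_neq_0[OF valuation formally_real] irreducible_rep_dim_pos[OF irr] by blast
  then have "c = schur_sum B \<rho>' \<rho>' i j j i"
    using schur_sum_conj[OF B split irr _ schur_rel[OF B] P Q PQ QP i j j i] by simp
  then have "c * len j = (\<Sum>b\<in>B. \<rho>' b $$ (i, j) * (\<rho>' (st b) $$ (j, i) * len j))"
    unfolding schur_sum_def by (simp add: sum_distrib_right mult.assoc)
  also have "\<dots> = len i * (\<Sum>b\<in>B. (\<rho>' b $$ (i, j))^2)"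
    using conj_rep_star_entry[OF j i]
    by (simp add: sum_distrib_left power2_eq_square ac_simps)
  finally show ?thesis .
qed

lemma val_schur_element_in_two_Gamma: "in_two_Gamma (\<nu> c)"
proof -
  have n: "0 < n" using irr by (rule irreducible_rep_dim_pos)
  obtain xs where xs: "(\<Sum>b\<in>B0. (\<rho>' b $$ (0, 0))^2) = sum_squares xs"
    using sum_squares_of_set[OF finite_basis[OF B0], of "\<lambda>b. \<rho>' b $$ (0, 0)"] by blast
  have "c * len 0 = len 0 * sum_squares xs"
    using schur_element_frame_identity[OF B0 n n] xs by (simp only:)
  then have "c = sum_squares xs" using len_nz[OF n] by (metis mult.commute mult_right_cancel)
  then show ?thesis using val_sum_squares_in_two_Gamma[OF valuation formally_real] c_nz by simp
qed

text \<open>Comparing valuations in the frame identity: \<open>\<nu> c\<close> equals the valuation of a sum of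
  squares containing \<open>(\<rho>' b)\<^sub>i\<^sub>j\<^sup>2\<close>, which is at most \<open>2 \<nu>((\<rho>' b)\<^sub>i\<^sub>j)\<close>.\<close>
lemma balanced_rep_conj: "balanced_rep sc \<tau> st \<nu> c \<rho>'"
proof -
  obtain g where g: "\<nu> c = g + g" using val_schur_element_in_two_Gamma unfolding in_two_Gamma_def by blast
  have "g \<le> \<nu> (\<rho>' b $$ (i, j))"
    if B: "star_sym_basis sc \<tau> st B" and b: "b \<in> B" and ij: "i < n" "j < n" and x: "\<rho>' b $$ (i, j) \<noteq> 0"
    for B b i j
  proof -
    obtain xs where xs: "(\<Sum>b\<in>B. (\<rho>' b $$ (i, j))^2) = sum_squares xs"
      "set xs = (\<lambda>b. \<rho>' b $$ (i, j)) ` B"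
      using sum_squares_of_set[OF finite_basis[OF B], of "\<lambda>b. \<rho>' b $$ (i, j)"] by blast
    have x_in: "\<rho>' b $$ (i, j) \<in> set xs" using xs(2) b by blast
    have xs_nz: "sum_squares xs \<noteq> 0"
      using sum_squares_eq_0_iff[OF valuation formally_real, of xs] x_in x by blast
    have "\<nu> c = \<nu> (c * len j)"
      using val_mult[OF valuation c_nz len_nz[OF ij(2)]] len_val[OF ij(2)] by simp
    also have "\<dots> = \<nu> (len i * sum_squares xs)"
      using schur_element_frame_identity[OF B ij] xs(1) by (simp only:)
    also have "\<dots> = \<nu> (sum_squares xs)"
      using val_mult[OF valuation len_nz[OF ij(1)] xs_nz] len_val[OF ij(1)] by simp
    also have "\<dots> \<le> \<nu> (\<rho>' b $$ (i, j)) + \<nu> (\<rho>' b $$ (i, j))"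
      by (rule val_sum_squares_le[OF valuation formally_real x_in x])
    finally have "g + g \<le> \<nu> (\<rho>' b $$ (i, j)) + \<nu> (\<rho>' b $$ (i, j))" using g by simp
    then show ?thesis by (rule double_le_double_imp_le)
  qed
  with g show ?thesis
    unfolding balanced_rep_def mat_val_ge_def using carrier_matD[OF rep'] by auto
qed

end

lemma exists_balanced_conj_rep:
  assumes split: "split_alg sc" and irr: "irreducible_rep sc n \<rho>" and c_nz: "c \<noteq> 0"
    and schur_rel: "\<And>B i j k l. star_sym_basis sc \<tau> st B \<Longrightarrow> i < n \<Longrightarrow> j < n \<Longrightarrow> k < n \<Longrightarrow> l < n \<Longrightarrow>
                      schur_sum B \<rho> \<rho> i j k l = (if i = l \<and> j = k then c else 0)"
  shows "in_two_Gamma (\<nu> c) \<and>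
    (\<exists>\<rho>'. irreducible_rep sc n \<rho>' \<and> iso_rep n \<rho> n \<rho>' \<and> balanced_rep sc \<tau> st \<nu> c \<rho>')"
proof -
  obtain P Q where frame: "P \<in> carrier_mat n n" "Q \<in> carrier_mat n n" "P * Q = 1\<^sub>m n" "Q * P = 1\<^sub>m n"
    and "\<And>k m. k < n \<Longrightarrow> m < n \<Longrightarrow> k \<noteq> m \<Longrightarrow> inv_form B0 n \<rho> (col P k) (col P m) = 0"
    and "\<And>k. k < n \<Longrightarrow> inv_form B0 n \<rho> (col P k) (col P k) \<noteq> 0"
    and "\<And>k. k < n \<Longrightarrow> \<nu> (inv_form B0 n \<rho> (col P k) (col P k)) = 0"
    using exists_unit_orthogonal_frame by metis
  note setting = split irr c_nz schur_rel this
  show ?thesis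
    using val_schur_element_in_two_Gamma[OF setting] balanced_rep_conj[OF setting]
      irreducible_rep_conj[OF frame irr] iso_rep_conj[OF frame] by blast
qed

end

end

theorem mainTheorem5:
  fixes \<nu> :: "'k::field \<Rightarrow> 'g::linordered_ab_group_add"
    and sc :: "'k \<Rightarrow> 'h::ring_1 \<Rightarrow> 'h"
    and \<tau> :: "'h \<Rightarrow> 'k"
    and st :: "'h \<Rightarrow> 'h"
    and \<Lambda> :: "'l set"
    and d :: "'l \<Rightarrow> nat"
    and \<rho>s :: "'l \<Rightarrow> 'h \<Rightarrow> 'k mat"
    and c :: "'l \<Rightarrow> 'k"
    and l0 :: 'l
  assumes val: "surjective_valuation \<nu>"
    and freal: "residue_formally_real \<nu>"
    and alg: "fd_algebra sc"
    and ss: "semisimple_alg sc"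
    and spl: "split_alg sc"
    and sym: "symmetric_trace_form sc \<tau>"
    and star: "lin_inv_antiaut sc st"
    and ex_basis: "\<exists>B. star_sym_basis sc \<tau> st B"
    and fin: "finite \<Lambda>"
    and irr: "\<forall>\<mu>\<in>\<Lambda>. irreducible_rep sc (d \<mu>) (\<rho>s \<mu>)"
    and noniso: "\<forall>\<mu>\<in>\<Lambda>. \<forall>\<mu>'\<in>\<Lambda>. iso_rep (d \<mu>) (\<rho>s \<mu>) (d \<mu>') (\<rho>s \<mu>') \<longrightarrow> \<mu> = \<mu>'"
    and complete: "\<forall>n \<rho>. irreducible_rep sc n \<rho> \<longrightarrow> (\<exists>\<mu>\<in>\<Lambda>. iso_rep (d \<mu>) (\<rho>s \<mu>) n \<rho>)"
    and schur_nz: "\<forall>\<mu>\<in>\<Lambda>. c \<mu> \<noteq> 0"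
    and schur: "\<forall>h. \<tau> h = (\<Sum>\<mu>\<in>\<Lambda>. inverse (c \<mu>) * mat_trace (\<rho>s \<mu> h))"
    and lam: "l0 \<in> \<Lambda>"
  shows "(\<exists>f :: 'k vec \<Rightarrow> 'k vec \<Rightarrow> 'k.
            (\<forall>u\<in>carrier_vec (d l0). \<forall>v\<in>carrier_vec (d l0). f u v = f v u) \<and>
            (\<forall>u\<in>carrier_vec (d l0). \<forall>v\<in>carrier_vec (d l0). \<forall>w\<in>carrier_vec (d l0).
                f (u + v) w = f u w + f v w) \<and>
            (\<forall>a. \<forall>u\<in>carrier_vec (d l0). \<forall>w\<in>carrier_vec (d l0). f (a \<cdot>\<^sub>v u) w = a * f u w) \<and>
            (\<forall>h. \<forall>v\<in>carrier_vec (d l0). \<forall>w\<in>carrier_vec (d l0).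
                f (\<rho>s l0 (st h) *\<^sub>v v) w = f v (\<rho>s l0 h *\<^sub>v w)) \<and>
            (\<forall>w\<in>carrier_vec (d l0). sum_of_squares (f w w) \<and> (f w w = 0 \<longleftrightarrow> w = 0\<^sub>v (d l0))) \<and>
            (\<forall>w\<in>carrier_vec (d l0). w \<noteq> 0\<^sub>v (d l0) \<longrightarrow> in_two_Gamma (\<nu> (f w w))))
       \<and> in_two_Gamma (\<nu> (c l0))
       \<and> (\<exists>\<rho>. irreducible_rep sc (d l0) \<rho> \<and> iso_rep (d l0) (\<rho>s l0) (d l0) \<rho> \<and>
              balanced_rep sc \<tau> st \<nu> (c l0) \<rho>)"
proof -
  interpret star_algebra sc \<tau> st using alg sym star by unfold_locales
  obtain B0 where B0: "star_sym_basis sc \<tau> st B0" using ex_basis by blast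
  have valuation: "is_valuation \<nu>" using val unfolding surjective_valuation_def by blast
  have irr0: "irreducible_rep sc (d l0) (\<rho>s l0)" using irr lam by blast
  then have rep0: "matrix_rep sc (d l0) (\<rho>s l0)" by (rule irreducible_rep_matrix_rep)
  have "schur_sum B (\<rho>s l0) (\<rho>s l0) i j k l = (if i = l \<and> j = k then c l0 else 0)"
    if "star_sym_basis sc \<tau> st B" "i < d l0" "j < d l0" "k < d l0" "l < d l0" for B i j k l
    using schur_sum_schur_element[OF that(1) spl fin irr noniso schur lam _ that(2-)] schur_nz lam by blast
  with exists_balanced_conj_rep[OF val freal rep0 B0 spl irr0] schur_nz lam
  obtain \<rho>' where two_Gamma: "in_two_Gamma (\<nu> (c l0))" and balanced: "irreducible_rep sc (d l0) \<rho>'"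
    "iso_rep (d l0) (\<rho>s l0) (d l0) \<rho>'" "balanced_rep sc \<tau> st \<nu> (c l0) \<rho>'"
    by blast
  show ?thesis
  proof (intro conjI exI[of _ "inv_form B0 (d l0) (\<rho>s l0)"] exI[of _ \<rho>'] ballI allI impI)
    show "inv_form B0 (d l0) (\<rho>s l0) u v = inv_form B0 (d l0) (\<rho>s l0) v u" for u v
      by (rule inv_form_commute)
  qed (simp_all add: two_Gamma balanced inv_form_add_left[OF B0 rep0] inv_form_smult_left[OF B0 rep0]
      inv_form_invariant[OF B0 rep0] sum_of_squares_inv_form[OF B0 rep0]
      inv_form_eq_0_iff[OF B0 rep0 valuation freal] val_inv_form_in_two_Gamma[OF B0 rep0 valuation freal])
qed

end
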